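(* Let $f:\mathbb{R}^+\to\mathbb{R}$ be twice continuously differentiable with $f>0$, $f'>0$, $f''>0$, and assume there exist constants $c_1\geq 1/2$ and $c_2>0$ such that $c_1 f''(x)\leq f''(y)\leq c_2 f''(x)$ whenever $0<x\leq y\leq 2x$. Then there exists a constant $C=C(f)$ such that for every function $\varphi$ from the integers to $\mathbb{C}$ with $|\varphi|\leq 1$, for all real $A\geq 2$ and all real $K>0$, \[ \frac 1A\left|\sum_{A<n\leq 2A}\varphi\bigl(\lfloor f(n)\rfloor\bigr)-\sum_{f(A)<m\leq f(2A)}\varphi(m)\,(f^{-1})'(m)\right| \leq C\left(f''(A)K^2+\frac{(\log A)^2}{K}+I(A,K)\right), \] where \[ I(A,K)=\frac{1}{f'(2A)-f'(A)}\int_{f'(A)}^{f'(2A)}\sup_{f(A)<\beta\leq f(2A)}\frac 1K\left|\sum_{0<n\leq K}\varphi\bigl(\lfloor n\alpha+\beta\rfloor\bigr)-\frac 1\alpha\sum_{\beta<m\leq \beta+K\alpha}\varphi(m)\right|\,d\alpha . \]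
   Context: $\lfloor\cdot\rfloor$ is the floor function; sums over $m$ or $n$ range over integers in the indicated intervals. $\varphi$ is a complex-valued arithmetic function bounded by $1$ (values at nonpositive integers may be taken to be $0$). $f^{-1}$ is the inverse function of the strictly increasing function $f$. *)

theory Defs
  imports "HOL-Analysis.Analysis"
begin

definition I_avg :: "(real \<Rightarrow> real) \<Rightarrow> (real \<Rightarrow> real) \<Rightarrow> (int \<Rightarrow> complex) \<Rightarrow> real \<Rightarrow> real \<Rightarrow> real" where
  "I_avg f f' \<phi> A K =
     (1 / (f' (2*A) - f' A)) *
     integral {f' A .. f' (2*A)}
       (\<lambda>\<alpha>. (SUP \<beta>\<in>{f A <.. f (2*A)}.
          (1 / K) * norm ((\<Sum>n\<in>{n::int. 0 < n \<and> real_of_int n \<le> K}. \<phi> \<lfloor>real_of_int n * \<alpha> + \<beta>\<rfloor>)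
              - complex_of_real (1 / \<alpha>) *
                (\<Sum>m\<in>{m::int. \<beta> < real_of_int m \<and> real_of_int m \<le> \<beta> + K * \<alpha>}. \<phi> m))))"

end

(*
  Put k = floor K and cover (A, 2A] by the blocks (t, t + k]. On a block, Taylor's formula gives
  f(t + h) = f(t) + h f'(t) + O(f''(A) K^2), so floor (f(t + h)) = floor (h f'(t) + f(t)) unless
  h f'(t) + f(t) lies just below an integer; two such exceptional h differ by some d <= k with
  d f'(t) close to an integer, and because f' grows by about f''(A) per unit step this happens for
  few t. The linearized block sum differs from (1/f'(t)) times the sum of phi(m) over
  f(t) < m <= f(t) + K f'(t) by at most K times the supremum in I(A,K) at alpha = f'(t), and on the
  same range the weights (f^-1)'(m) are 1/f'(t) up to a small error. Summing over t, the suprema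
  form a Riemann sum of the integral defining I(A,K), since they move little as alpha runs through
  a cell [f'(t), f'(t+1)] of length comparable to f''(A). If K < 1 or f''(A) K^2 is large, the
  trivial bound on both sums is enough.
*)

theory Submission
  imports Defs
begin

lemma int_points_Ioc_eq: "{m::int. a < real_of_int m \<and> real_of_int m \<le> b} = {\<lfloor>a\<rfloor>+1..\<lfloor>b\<rfloor>}"
proof -
  have "\<And>x::int. a < real_of_int x \<longleftrightarrow> \<lfloor>a\<rfloor> + 1 \<le> x"
    using floor_less_iff[of a] by (metis zless_add1_eq add1_zle_eq)
  moreover have "\<And>x::int. real_of_int x \<le> b \<longleftrightarrow> x \<le> \<lfloor>b\<rfloor>" by (simp add: le_floor_iff)
  ultimately show ?thesis by auto
qed

lemma finite_int_points_Ioc: "finite {m::int. a < real_of_int m \<and> real_of_int m \<le> b}"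
  unfolding int_points_Ioc_eq by simp

lemma card_int_points_Ioc_le:
  assumes "a \<le> b"
  shows "real (card {m::int. a < real_of_int m \<and> real_of_int m \<le> b}) \<le> b - a + 1"
proof -
  have "real (card {m::int. a < real_of_int m \<and> real_of_int m \<le> b}) = real (nat (\<lfloor>b\<rfloor> - \<lfloor>a\<rfloor>))"
    unfolding int_points_Ioc_eq by simp
  also have "\<dots> = real_of_int (\<lfloor>b\<rfloor> - \<lfloor>a\<rfloor>)"
    using floor_mono[OF assms] by simp
  also have "\<dots> \<le> b - a + 1"
    using of_int_floor_le[of b] real_of_int_floor_add_one_gt[of a] by linarith
  finally show ?thesis .
qed

lemma positive_ints_le_eq: "{n::int. 0 < n \<and> real_of_int n \<le> K} = {1..\<lfloor>K\<rfloor>}"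
  by (auto simp: le_floor_iff)

lemma card_filter_sum: "finite S \<Longrightarrow> card {x\<in>S. Pr x} = (\<Sum>x\<in>S. if Pr x then 1 else 0)"
  using sum.inter_filter[of S "\<lambda>_. 1::nat" Pr] by simp

lemma norm_sum_le_card_mult:
  assumes "\<And>x. x \<in> S \<Longrightarrow> norm (g x) \<le> c"
  shows "norm (sum g S) \<le> real (card S) * c"
  using norm_sum[of g S] sum_bounded_above[of S "\<lambda>x. norm (g x)" c] assms by fastforce

lemma norm_sum_le_card:
  assumes "\<forall>m. norm (\<phi> m) \<le> (1::real)"
  shows "norm (\<Sum>x\<in>S. \<phi> (g x)) \<le> real (card S)"
  using norm_sum_le_card_mult[of S "\<lambda>x. \<phi> (g x)" 1] assms by simp

definition near_int :: "real \<Rightarrow> real \<Rightarrow> bool" where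
  "near_int y d \<longleftrightarrow> (\<exists>m::int. \<bar>y - real_of_int m\<bar> \<le> d)"

lemma near_int_mono: "near_int y d \<Longrightarrow> d \<le> d' \<Longrightarrow> near_int y d'"
  unfolding near_int_def by (meson order.trans)

lemma floor_neq_imp_int_in_gap:
  fixes x y \<delta> :: real
  assumes "x \<le> y" "y \<le> x + \<delta>" "\<lfloor>x\<rfloor> \<noteq> \<lfloor>y\<rfloor>"
  shows "\<exists>m::int. 0 < real_of_int m - x \<and> real_of_int m - x \<le> \<delta>"
proof -
  have "\<lfloor>x\<rfloor> < \<lfloor>y\<rfloor>" using assms floor_mono[of x y] by linarith
  then have "x < real_of_int \<lfloor>y\<rfloor>" by (meson floor_less_iff)
  moreover have "real_of_int \<lfloor>y\<rfloor> \<le> y" by simp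
  ultimately show ?thesis using assms(2) by (intro exI[of _ "\<lfloor>y\<rfloor>"]) linarith
qed

text \<open>If \<open>h0 < h\<close> are both bad, the integers just above \<open>h0 \<alpha> + \<beta>\<close> and \<open>h \<alpha> + \<beta>\<close> differ
  by an integer within \<open>\<delta>\<close> of \<open>(h - h0) \<alpha>\<close>.\<close>

lemma card_floor_mismatch_le:
  fixes \<alpha> \<beta> \<delta> :: real and k :: int and Bad :: "int set"
  assumes sub: "Bad \<subseteq> {1..k}"
    and bad: "\<And>h. h \<in> Bad \<Longrightarrow> \<exists>m::int. 0 < real_of_int m - (real_of_int h*\<alpha>+\<beta>) \<and> real_of_int m - (real_of_int h*\<alpha>+\<beta>) \<le> \<delta>"
  shows "card Bad \<le> 1 + card {d\<in>{1..k}. near_int (real_of_int d*\<alpha>) \<delta>}"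
proof (cases "Bad = {}")
  case True then show ?thesis by simp
next
  case False
  have fin: "finite Bad" using sub finite_subset by blast
  define h0 where "h0 = Min Bad"
  have h0B: "h0 \<in> Bad" using Min_in fin False h0_def by blast
  have h0le: "\<And>h. h\<in>Bad \<Longrightarrow> h0 \<le> h" using fin h0_def by simp
  obtain m0 where m0: "0 < real_of_int m0 - (real_of_int h0*\<alpha>+\<beta>)" "real_of_int m0 - (real_of_int h0*\<alpha>+\<beta>) \<le> \<delta>"
    using bad h0B by blast
  have img: "(\<lambda>h. h - h0) ` (Bad - {h0}) \<subseteq> {d\<in>{1..k}. near_int (real_of_int d*\<alpha>) \<delta>}"
  proof
    fix d assume "d \<in> (\<lambda>h. h - h0) ` (Bad - {h0})"
    then obtain h where h: "h \<in> Bad" "h \<noteq> h0" "d = h - h0" by blast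
    obtain m where m: "0 < real_of_int m - (real_of_int h*\<alpha>+\<beta>)" "real_of_int m - (real_of_int h*\<alpha>+\<beta>) \<le> \<delta>"
      using bad h(1) by blast
    have "h0 < h" using h0le h by force
    moreover have "h \<le> k" "1 \<le> h0" using sub h h0B by auto
    moreover have "\<bar>real_of_int d * \<alpha> - real_of_int (m - m0)\<bar> \<le> \<delta>"
    proof -
      have "real_of_int d * \<alpha> - real_of_int (m - m0) =
            (real_of_int m0 - (real_of_int h0*\<alpha>+\<beta>)) - (real_of_int m - (real_of_int h*\<alpha>+\<beta>))"
        unfolding h(3) by (simp add: algebra_simps)
      then show ?thesis using m m0 by linarith
    qed
    moreover have "near_int (real_of_int d*\<alpha>) \<delta>"
      unfolding near_int_def by (rule exI[of _ "m - m0"]) fact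
    ultimately show "d \<in> {d\<in>{1..k}. near_int (real_of_int d*\<alpha>) \<delta>}"
      using h(3) by auto
  qed
  have "card Bad = card (Bad - {h0}) + 1" using fin h0B
    by (metis Suc_eq_plus1 card.remove)
  also have "card (Bad - {h0}) = card ((\<lambda>h. h - h0) ` (Bad - {h0}))"
    by (rule card_image[symmetric]) (auto simp: inj_on_def)
  also have "\<dots> \<le> card {d\<in>{1..k}. near_int (real_of_int d*\<alpha>) \<delta>}"
    by (rule card_mono[OF _ img]) (rule finite_subset[of _ "{1..k}"], auto)
  finally show ?thesis by simp
qed

lemma norm_sum_diff_le_card_neq:
  fixes \<phi> :: "int \<Rightarrow> complex" and u v :: "'a \<Rightarrow> int"
  assumes "finite H" "\<And>m. norm (\<phi> m) \<le> 1"
  shows "norm ((\<Sum>h\<in>H. \<phi> (u h)) - (\<Sum>h\<in>H. \<phi> (v h))) \<le> 2 * real (card {h\<in>H. u h \<noteq> v h})"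
proof -
  have "norm ((\<Sum>h\<in>H. \<phi> (u h)) - (\<Sum>h\<in>H. \<phi> (v h))) = norm (\<Sum>h\<in>H. \<phi> (u h) - \<phi> (v h))"
    by (simp add: sum_subtractf)
  also have "\<dots> \<le> (\<Sum>h\<in>H. norm (\<phi> (u h) - \<phi> (v h)))" by (rule norm_sum)
  also have "\<dots> \<le> (\<Sum>h\<in>H. if u h \<noteq> v h then 2 else 0)"
  proof (rule sum_mono)
    fix h assume "h \<in> H"
    have "norm (\<phi> (u h) - \<phi> (v h)) \<le> norm (\<phi> (u h)) + norm (\<phi> (v h))" by (rule norm_triangle_ineq4)
    then show "norm (\<phi> (u h) - \<phi> (v h)) \<le> (if u h \<noteq> v h then 2 else 0)"
      using assms(2)[of "u h"] assms(2)[of "v h"] by auto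
  qed
  also have "\<dots> = (\<Sum>h\<in>{h\<in>H. u h \<noteq> v h}. 2)" using assms(1) by (rule sum.inter_filter[symmetric])
  also have "\<dots> = 2 * real (card {h\<in>H. u h \<noteq> v h})" by simp
  finally show ?thesis .
qed

lemma norm_sum_shift_diff_le:
  fixes G :: "int \<Rightarrow> 'a::real_normed_vector"
  assumes "0 \<le> h" and bound: "\<And>n. p \<le> n \<Longrightarrow> n \<le> q + h \<Longrightarrow> norm (G n) \<le> B" and "0 \<le> B"
  shows "norm ((\<Sum>t\<in>{p..q}. G (t + h)) - (\<Sum>t\<in>{p..q}. G t)) \<le> 2*B*real_of_int h"
  using assms(1,2)
proof (induction h rule: int_ge_induct)
  case base
  then show ?case by simp
next
  case (step h)
  have one_step: "norm ((\<Sum>t\<in>{p..q}. G (t + (h+1))) - (\<Sum>t\<in>{p..q}. G (t + h))) \<le> 2*B"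
  proof (cases "p \<le> q")
    case True
    have "(\<Sum>t\<in>{p..q}. G (t + (h+1))) = (\<Sum>t\<in>{p+1..q+1}. G (t + h))"
      by (rule sum.reindex_bij_witness[of _ "\<lambda>t. t - 1" "\<lambda>t. t + 1"]) (auto simp: algebra_simps)
    also have "{p+1..q+1} = insert (q+1) {p+1..q}" using True by auto
    moreover have "{p..q} = insert p {p+1..q}" using True by auto
    ultimately have "(\<Sum>t\<in>{p..q}. G (t + (h+1))) - (\<Sum>t\<in>{p..q}. G (t + h)) = G (q + 1 + h) - G (p + h)"
      by simp
    also have "norm \<dots> \<le> norm (G (q + 1 + h)) + norm (G (p + h))" by (rule norm_triangle_ineq4)
    also have "\<dots> \<le> 2*B" using step.prems[of "q + 1 + h"] step.prems[of "p + h"] True step.hyps by simp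
    finally show ?thesis .
  qed (use \<open>0 \<le> B\<close> in simp)
  have "norm ((\<Sum>t\<in>{p..q}. G (t + h)) - (\<Sum>t\<in>{p..q}. G t)) \<le> 2*B*real_of_int h"
    using step.IH step.prems by simp
  then show ?case
    using norm_triangle_ineq[of "(\<Sum>t\<in>{p..q}. G (t + (h+1))) - (\<Sum>t\<in>{p..q}. G (t + h))"
        "(\<Sum>t\<in>{p..q}. G (t + h)) - (\<Sum>t\<in>{p..q}. G t)"] one_step
    by (simp add: algebra_simps)
qed

lemma norm_sum_shifts_diff_le:
  fixes G :: "int \<Rightarrow> 'a::real_normed_algebra_1"
  assumes "finite H" and H: "\<And>j. j \<in> H \<Longrightarrow> 0 \<le> j \<and> j \<le> h"
    and bound: "\<And>n. p \<le> n \<Longrightarrow> n \<le> q + h \<Longrightarrow> norm (G n) \<le> B" and "0 \<le> B"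
  shows "norm ((\<Sum>j\<in>H. \<Sum>t\<in>{p..q}. G (t + j)) - of_nat (card H) * (\<Sum>t\<in>{p..q}. G t))
           \<le> real (card H) * (2*B*real_of_int h)"
proof -
  have "(\<Sum>j\<in>H. \<Sum>t\<in>{p..q}. G (t + j)) - of_nat (card H) * (\<Sum>t\<in>{p..q}. G t)
      = (\<Sum>j\<in>H. (\<Sum>t\<in>{p..q}. G (t + j)) - (\<Sum>t\<in>{p..q}. G t))"
    by (simp add: sum_subtractf)
  also have "norm \<dots> \<le> real (card H) * (2*B*real_of_int h)"
  proof (rule order_trans[OF norm_sum sum_bounded_above])
    fix j assume j: "j \<in> H"
    have "norm ((\<Sum>t\<in>{p..q}. G (t + j)) - (\<Sum>t\<in>{p..q}. G t)) \<le> 2*B*real_of_int j"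
      using H[OF j] bound \<open>0 \<le> B\<close> by (intro norm_sum_shift_diff_le) auto
    also have "\<dots> \<le> 2*B*real_of_int h" using H[OF j] \<open>0 \<le> B\<close> by (intro mult_left_mono) auto
    finally show "norm ((\<Sum>t\<in>{p..q}. G (t + j)) - (\<Sum>t\<in>{p..q}. G t)) \<le> 2*B*real_of_int h" .
  qed
  finally show ?thesis .
qed

lemma sum_int_points_Ioc_split:
  fixes G :: "int \<Rightarrow> 'a::comm_monoid_add"
  assumes "x \<le> y" "y \<le> z"
  shows "(\<Sum>m\<in>{m::int. x < real_of_int m \<and> real_of_int m \<le> z}. G m) =
         (\<Sum>m\<in>{m::int. x < real_of_int m \<and> real_of_int m \<le> y}. G m) + (\<Sum>m\<in>{m::int. y < real_of_int m \<and> real_of_int m \<le> z}. G m)"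
proof -
  have "{m::int. x < real_of_int m \<and> real_of_int m \<le> z} =
        {m::int. x < real_of_int m \<and> real_of_int m \<le> y} \<union> {m::int. y < real_of_int m \<and> real_of_int m \<le> z}"
    using assms by auto
  moreover have "{m::int. x < real_of_int m \<and> real_of_int m \<le> y} \<inter> {m::int. y < real_of_int m \<and> real_of_int m \<le> z} = {}"
    by auto
  ultimately show ?thesis by (simp add: sum.union_disjoint finite_int_points_Ioc)
qed

lemma sum_int_points_Ioc_blocks:
  fixes v :: "int \<Rightarrow> real" and G :: "int \<Rightarrow> 'a::comm_monoid_add"
  assumes mono: "\<And>s t. a \<le> s \<Longrightarrow> s \<le> t \<Longrightarrow> v s \<le> v t" and ab: "a \<le> b"
  shows "(\<Sum>s\<in>{a..<b}. \<Sum>m\<in>{m::int. v s < real_of_int m \<and> real_of_int m \<le> v (s+1)}. G m) =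
         (\<Sum>m\<in>{m::int. v a < real_of_int m \<and> real_of_int m \<le> v b}. G m)"
  using ab
proof (induction b rule: int_ge_induct)
  case base
  have e: "{m::int. v a < real_of_int m \<and> real_of_int m \<le> v a} = {}" by auto
  show ?case unfolding e by simp
next
  case (step b)
  have "{a..<b+1} = insert b {a..<b}" using step by auto
  then have "(\<Sum>s\<in>{a..<b+1}. \<Sum>m\<in>{m::int. v s < real_of_int m \<and> real_of_int m \<le> v (s+1)}. G m) =
     (\<Sum>m\<in>{m::int. v b < real_of_int m \<and> real_of_int m \<le> v (b+1)}. G m) +
     (\<Sum>s\<in>{a..<b}. \<Sum>m\<in>{m::int. v s < real_of_int m \<and> real_of_int m \<le> v (s+1)}. G m)" by simp
  also have "\<dots> = (\<Sum>m\<in>{m::int. v a < real_of_int m \<and> real_of_int m \<le> v (b+1)}. G m)"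
    using step.IH sum_int_points_Ioc_split[of "v a" "v b" "v (b+1)" G] mono[of a b] mono[of b "b+1"] step.hyps
    by (simp add: add.commute)
  finally show ?case .
qed

lemma increments_imp_growth:
  fixes u :: "int \<Rightarrow> real"
  assumes gap: "\<And>t. a \<le> t \<Longrightarrow> t < b \<Longrightarrow> u t + \<gamma> \<le> u (t+1)"
  assumes "a \<le> s" "s \<le> t" "t \<le> b"
  shows "u s + \<gamma> * real_of_int (t - s) \<le> u t"
  using assms(3,4)
proof (induction t rule: int_ge_induct)
  case base then show ?case by simp
next
  case (step t)
  have "u s + \<gamma> * real_of_int (t - s) \<le> u t" using step by simp
  moreover have "u t + \<gamma> \<le> u (t+1)" using gap[of t] step assms(2) by simp
  ultimately show ?case by (simp add: algebra_simps)
qed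

lemma int_points_Icc_eq: "{m::int. x \<le> real_of_int m \<and> real_of_int m \<le> y} = {\<lceil>x\<rceil>..\<lfloor>y\<rfloor>}"
  by (auto simp: ceiling_le_iff le_floor_iff)

lemma card_int_points_Icc_le:
  assumes "x \<le> y"
  shows "real (card {m::int. x \<le> real_of_int m \<and> real_of_int m \<le> y}) \<le> y - x + 1"
proof (cases "\<lceil>x\<rceil> \<le> \<lfloor>y\<rfloor> + 1")
  case True
  then have "real (card {m::int. x \<le> real_of_int m \<and> real_of_int m \<le> y}) = real_of_int \<lfloor>y\<rfloor> + 1 - real_of_int \<lceil>x\<rceil>"
    unfolding int_points_Icc_eq by simp
  then show ?thesis using of_int_floor_le[of y] le_of_int_ceiling[of x] by linarith
qed (use assms in \<open>simp add: int_points_Icc_eq\<close>)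

lemma card_close_values_le:
  fixes u :: "int \<Rightarrow> real"
  assumes gap: "\<And>t. a \<le> t \<Longrightarrow> t < b \<Longrightarrow> u t + \<gamma> \<le> u (t+1)" and "\<gamma> > 0" "\<delta> \<ge> 0"
  shows "real (card {t\<in>{a..b}. \<bar>u t - y\<bar> \<le> \<delta>}) \<le> 2*\<delta>/\<gamma> + 1"
proof (cases "{t\<in>{a..b}. \<bar>u t - y\<bar> \<le> \<delta>} = {}")
  case False
  define F where "F = {t\<in>{a..b}. \<bar>u t - y\<bar> \<le> \<delta>}"
  have finF: "finite F" unfolding F_def by (rule finite_subset[of _ "{a..b}"]) auto
  define s where "s = Min F"
  have s: "s \<in> F" using Min_in[OF finF] False unfolding s_def F_def by simp
  have "F \<subseteq> {s..s + \<lfloor>2*\<delta>/\<gamma>\<rfloor>}"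
  proof
    fix t assume t: "t \<in> F"
    have "s \<le> t" using t finF s_def by simp
    then have "u s + \<gamma> * real_of_int (t - s) \<le> u t"
      using increments_imp_growth[where u=u and \<gamma>=\<gamma> and a=a and b=b, OF gap] s t unfolding F_def by auto
    moreover have "\<bar>u t - y\<bar> \<le> \<delta>" "\<bar>u s - y\<bar> \<le> \<delta>" using s t unfolding F_def by auto
    ultimately have "real_of_int (t - s) \<le> 2*\<delta>/\<gamma>" using \<open>\<gamma> > 0\<close> by (simp add: field_simps)
    then have "t - s \<le> \<lfloor>2*\<delta>/\<gamma>\<rfloor>" by (simp only: le_floor_iff)
    then show "t \<in> {s..s + \<lfloor>2*\<delta>/\<gamma>\<rfloor>}" using \<open>s \<le> t\<close> by simp
  qed
  then have "card F \<le> nat (\<lfloor>2*\<delta>/\<gamma>\<rfloor> + 1)" using card_mono[of "{s..s + \<lfloor>2*\<delta>/\<gamma>\<rfloor>}"] by fastforce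
  moreover have "0 \<le> \<lfloor>2*\<delta>/\<gamma>\<rfloor>" using assms(2,3) by simp
  ultimately have "real (card F) \<le> real_of_int \<lfloor>2*\<delta>/\<gamma>\<rfloor> + 1" by linarith
  then show ?thesis unfolding F_def by linarith
next
  case True
  show ?thesis unfolding True using assms(2,3) by simp
qed

lemma card_near_int_le:
  fixes u :: "int \<Rightarrow> real"
  assumes gap: "\<And>t. a \<le> t \<Longrightarrow> t < b \<Longrightarrow> u t + \<gamma> \<le> u (t+1)" and "\<gamma> > 0" "\<delta> \<ge> 0" "a \<le> b"
  shows "real (card {t\<in>{a..b}. near_int (u t) \<delta>}) \<le> (u b - u a + 2*\<delta> + 1) * (2*\<delta>/\<gamma> + 1)"
proof -
  define R where "R = {m::int. u a - \<delta> \<le> real_of_int m \<and> real_of_int m \<le> u b + \<delta>}"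
  have range: "u a \<le> u t \<and> u t \<le> u b" if "t \<in> {a..b}" for t
  proof -
    have "u a + \<gamma> * real_of_int (t - a) \<le> u t" "u t + \<gamma> * real_of_int (b - t) \<le> u b"
      using increments_imp_growth[where u=u and \<gamma>=\<gamma> and a=a and b=b, OF gap] that by auto
    moreover have "0 \<le> \<gamma> * real_of_int (t - a)" "0 \<le> \<gamma> * real_of_int (b - t)"
      using that assms(2) by auto
    ultimately show ?thesis by linarith
  qed
  have "{t\<in>{a..b}. near_int (u t) \<delta>} \<subseteq> (\<Union>m\<in>R. {t\<in>{a..b}. \<bar>u t - real_of_int m\<bar> \<le> \<delta>})"
  proof
    fix t assume t: "t \<in> {t\<in>{a..b}. near_int (u t) \<delta>}"
    then obtain m where m: "\<bar>u t - real_of_int m\<bar> \<le> \<delta>" unfolding near_int_def by auto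
    have "m \<in> R" using m range[of t] t unfolding R_def by auto
    then show "t \<in> (\<Union>m\<in>R. {t\<in>{a..b}. \<bar>u t - real_of_int m\<bar> \<le> \<delta>})" using m t by auto
  qed
  then have "card {t\<in>{a..b}. near_int (u t) \<delta>} \<le> card (\<Union>m\<in>R. {t\<in>{a..b}. \<bar>u t - real_of_int m\<bar> \<le> \<delta>})"
    by (rule card_mono[rotated]) (rule finite_subset[of _ "{a..b}"], auto)
  also have "\<dots> \<le> (\<Sum>m\<in>R. card {t\<in>{a..b}. \<bar>u t - real_of_int m\<bar> \<le> \<delta>})"
    by (rule card_UN_le) (simp add: R_def int_points_Icc_eq)
  finally have "real (card {t\<in>{a..b}. near_int (u t) \<delta>}) \<le> (\<Sum>m\<in>R. real (card {t\<in>{a..b}. \<bar>u t - real_of_int m\<bar> \<le> \<delta>}))"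
    by (simp only: of_nat_sum[symmetric] of_nat_le_iff)
  also have "\<dots> \<le> (\<Sum>m\<in>R. 2*\<delta>/\<gamma> + 1)"
    by (rule sum_mono) (rule card_close_values_le[where u=u and \<gamma>=\<gamma> and a=a and b=b, OF gap assms(2,3)])
  also have "\<dots> = real (card R) * (2*\<delta>/\<gamma> + 1)" by simp
  also have "\<dots> \<le> (u b - u a + 2*\<delta> + 1) * (2*\<delta>/\<gamma> + 1)"
  proof (rule mult_right_mono)
    have "u a \<le> u b" using range[of a] assms(4) by simp
    then show "real (card R) \<le> u b - u a + 2*\<delta> + 1"
      using card_int_points_Icc_le[of "u a - \<delta>" "u b + \<delta>"] assms(3) unfolding R_def by simp
    show "0 \<le> 2*\<delta>/\<gamma> + 1" using assms(2,3) by simp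
  qed
  finally show ?thesis .
qed

definition short_disc :: "(int \<Rightarrow> complex) \<Rightarrow> real \<Rightarrow> real \<Rightarrow> real \<Rightarrow> real" where
  "short_disc \<phi> K \<alpha> \<beta> = (1 / K) * norm ((\<Sum>n\<in>{n::int. 0 < n \<and> real_of_int n \<le> K}. \<phi> \<lfloor>real_of_int n * \<alpha> + \<beta>\<rfloor>)
              - complex_of_real (1 / \<alpha>) *
                (\<Sum>m\<in>{m::int. \<beta> < real_of_int m \<and> real_of_int m \<le> \<beta> + K * \<alpha>}. \<phi> m))"

definition sup_disc :: "(int \<Rightarrow> complex) \<Rightarrow> real \<Rightarrow> real \<Rightarrow> real \<Rightarrow> real \<Rightarrow> real" where
  "sup_disc \<phi> K p q \<alpha> = (SUP \<beta>\<in>{p <.. q}. short_disc \<phi> K \<alpha> \<beta>)"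

lemma I_avg_eq_integral_sup_disc: "I_avg f f' \<phi> A K = (1 / (f' (2*A) - f' A)) * integral {f' A .. f' (2*A)} (sup_disc \<phi> K (f A) (f (2*A)))"
  unfolding I_avg_def sup_disc_def short_disc_def by simp

lemma card_positive_ints_le: "K \<ge> 0 \<Longrightarrow> real (card {n::int. 0 < n \<and> real_of_int n \<le> K}) \<le> K"
  unfolding positive_ints_le_eq by simp

lemma short_disc_bounds:
  assumes K: "K > 0" and a: "\<alpha> > 0" and phi: "\<forall>m. norm (\<phi> m) \<le> 1"
  shows "0 \<le> short_disc \<phi> K \<alpha> \<beta>" "short_disc \<phi> K \<alpha> \<beta> \<le> 2 + 1/(K*\<alpha>)"
proof -
  show "0 \<le> short_disc \<phi> K \<alpha> \<beta>" unfolding short_disc_def using K by simp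
  let ?X = "(\<Sum>n\<in>{n::int. 0 < n \<and> real_of_int n \<le> K}. \<phi> \<lfloor>real_of_int n * \<alpha> + \<beta>\<rfloor>)"
  let ?Y = "(\<Sum>m\<in>{m::int. \<beta> < real_of_int m \<and> real_of_int m \<le> \<beta> + K * \<alpha>}. \<phi> m)"
  have nX: "norm ?X \<le> K"
    using norm_sum_le_card[OF phi, of "\<lambda>n. \<lfloor>real_of_int n * \<alpha> + \<beta>\<rfloor>" "{n::int. 0 < n \<and> real_of_int n \<le> K}"]
      card_positive_ints_le[of K] K by linarith
  have nY: "norm ?Y \<le> K*\<alpha> + 1"
    using norm_sum_le_card[OF phi, of "\<lambda>x. x" "{m::int. \<beta> < real_of_int m \<and> real_of_int m \<le> \<beta> + K * \<alpha>}"]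
      card_int_points_Ioc_le[of \<beta> "\<beta> + K*\<alpha>"] K a by simp
  have "norm (?X - complex_of_real (1/\<alpha>) * ?Y) \<le> norm ?X + norm (complex_of_real (1/\<alpha>) * ?Y)"
    by (rule norm_triangle_ineq4)
  also have "norm (complex_of_real (1/\<alpha>) * ?Y) = (1/\<alpha>) * norm ?Y" using a by (simp only: norm_mult norm_of_real) simp
  also have "(1/\<alpha>) * norm ?Y \<le> (1/\<alpha>) * (K*\<alpha> + 1)" using nY a by (intro mult_left_mono) auto
  also have "(1/\<alpha>) * (K*\<alpha> + 1) = K + 1/\<alpha>" using a by (simp add: field_simps)
  finally have "norm (?X - complex_of_real (1/\<alpha>) * ?Y) \<le> 2*K + 1/\<alpha>" using nX by linarith
  then have "(1/K) * norm (?X - complex_of_real (1/\<alpha>) * ?Y) \<le> (1/K) * (2*K + 1/\<alpha>)"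
    using K by (intro mult_left_mono) auto
  also have "(1/K) * (2*K + 1/\<alpha>) = 2 + 1/(K*\<alpha>)" using K by (simp add: field_simps)
  finally show "short_disc \<phi> K \<alpha> \<beta> \<le> 2 + 1/(K*\<alpha>)" unfolding short_disc_def .
qed

lemma bdd_above_short_disc:
  assumes K: "K > 0" and a: "\<alpha> > 0" and phi: "\<forall>m. norm (\<phi> m) \<le> 1"
  shows "bdd_above ((\<lambda>\<beta>. short_disc \<phi> K \<alpha> \<beta>) ` S)"
  using short_disc_bounds(2)[OF K a phi] by (intro bdd_aboveI2)

lemma short_disc_le_sup_disc:
  assumes K: "K > 0" and a: "\<alpha> > 0" and phi: "\<forall>m. norm (\<phi> m) \<le> 1" and b: "p < \<beta>" "\<beta> \<le> q"
  shows "short_disc \<phi> K \<alpha> \<beta> \<le> sup_disc \<phi> K p q \<alpha>"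
  unfolding sup_disc_def using b by (intro cSUP_upper bdd_above_short_disc[OF K a phi]) auto

lemma sup_disc_le:
  assumes K: "K > 0" and a: "\<alpha> > 0" and phi: "\<forall>m. norm (\<phi> m) \<le> 1" and pq: "p < q"
  shows "sup_disc \<phi> K p q \<alpha> \<le> 2 + 1/(K*\<alpha>)"
  unfolding sup_disc_def using pq by (intro cSUP_least short_disc_bounds(2)[OF K a phi]) auto

lemma sup_disc_nonneg:
  assumes K: "K > 0" and a: "\<alpha> > 0" and phi: "\<forall>m. norm (\<phi> m) \<le> 1" and pq: "p < q"
  shows "0 \<le> sup_disc \<phi> K p q \<alpha>"
  using short_disc_bounds(1)[OF K a phi, of q] short_disc_le_sup_disc[OF K a phi pq order_refl] by linarith

lemma norm_floor_sum_perturb: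
  fixes \<phi> :: "int \<Rightarrow> complex"
  assumes "0 \<le> K" "\<alpha>0 \<le> \<alpha>" "\<alpha> \<le> \<alpha>0 + \<eta>" and phi: "\<forall>m. norm (\<phi> m) \<le> 1"
  shows "norm ((\<Sum>n\<in>{1..\<lfloor>K\<rfloor>}. \<phi> \<lfloor>real_of_int n * \<alpha>0 + \<beta>\<rfloor>) - (\<Sum>n\<in>{1..\<lfloor>K\<rfloor>}. \<phi> \<lfloor>real_of_int n * \<alpha> + \<beta>\<rfloor>))
           \<le> 2 * (1 + real (card {d\<in>{1..\<lfloor>K\<rfloor>}. near_int (real_of_int d * \<alpha>0) (K*\<eta>)}))"
proof -
  define Bad where "Bad = {n\<in>{1..\<lfloor>K\<rfloor>}. \<lfloor>real_of_int n * \<alpha>0 + \<beta>\<rfloor> \<noteq> \<lfloor>real_of_int n * \<alpha> + \<beta>\<rfloor>}"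
  have "card Bad \<le> 1 + card {d\<in>{1..\<lfloor>K\<rfloor>}. near_int (real_of_int d * \<alpha>0) (K*\<eta>)}"
  proof (rule card_floor_mismatch_le)
    show "Bad \<subseteq> {1..\<lfloor>K\<rfloor>}" unfolding Bad_def by auto
    fix h assume h: "h \<in> Bad"
    then have h1: "1 \<le> h" "real_of_int h \<le> K" unfolding Bad_def by (auto simp: le_floor_iff)
    show "\<exists>m::int. 0 < real_of_int m - (real_of_int h*\<alpha>0+\<beta>) \<and> real_of_int m - (real_of_int h*\<alpha>0+\<beta>) \<le> K*\<eta>"
    proof (rule floor_neq_imp_int_in_gap)
      show "real_of_int h * \<alpha>0 + \<beta> \<le> real_of_int h * \<alpha> + \<beta>" using h1 assms(2) by (simp add: mult_left_mono)
      have "real_of_int h * (\<alpha> - \<alpha>0) \<le> K * \<eta>" using h1 assms(2,3) by (intro mult_mono) auto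
      then show "real_of_int h * \<alpha> + \<beta> \<le> real_of_int h * \<alpha>0 + \<beta> + K * \<eta>" by (simp add: algebra_simps)
      show "\<lfloor>real_of_int h * \<alpha>0 + \<beta>\<rfloor> \<noteq> \<lfloor>real_of_int h * \<alpha> + \<beta>\<rfloor>" using h unfolding Bad_def by auto
    qed
  qed
  moreover have "norm ((\<Sum>n\<in>{1..\<lfloor>K\<rfloor>}. \<phi> \<lfloor>real_of_int n * \<alpha>0 + \<beta>\<rfloor>) - (\<Sum>n\<in>{1..\<lfloor>K\<rfloor>}. \<phi> \<lfloor>real_of_int n * \<alpha> + \<beta>\<rfloor>))
      \<le> 2 * real (card Bad)"
    unfolding Bad_def by (rule norm_sum_diff_le_card_neq) (use phi in auto)
  ultimately show ?thesis by (simp add: of_nat_le_iff[symmetric])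
qed

lemma norm_scaled_count_perturb:
  fixes \<phi> :: "int \<Rightarrow> complex"
  assumes "0 \<le> K" "0 < \<alpha>0" "\<alpha>0 \<le> \<alpha>" "\<alpha> \<le> \<alpha>0 + \<eta>" and phi: "\<forall>m. norm (\<phi> m) \<le> 1"
  shows "norm (complex_of_real (1/\<alpha>0) * (\<Sum>m\<in>{m::int. \<beta> < real_of_int m \<and> real_of_int m \<le> \<beta> + K*\<alpha>0}. \<phi> m)
              - complex_of_real (1/\<alpha>) * (\<Sum>m\<in>{m::int. \<beta> < real_of_int m \<and> real_of_int m \<le> \<beta> + K*\<alpha>}. \<phi> m))
           \<le> 2*K*\<eta>/\<alpha>0 + \<eta>/\<alpha>0^2 + 1/\<alpha>0"
proof -
  define S0 where "S0 = {m::int. \<beta> < real_of_int m \<and> real_of_int m \<le> \<beta> + K*\<alpha>0}"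
  define S1 where "S1 = {m::int. \<beta> < real_of_int m \<and> real_of_int m \<le> \<beta> + K*\<alpha>}"
  define S2 where "S2 = {m::int. \<beta> + K*\<alpha>0 < real_of_int m \<and> real_of_int m \<le> \<beta> + K*\<alpha>}"
  have \<eta>: "0 \<le> \<eta>" "0 < \<alpha>" using assms(2-4) by linarith+
  have KA: "K*\<alpha>0 \<le> K*\<alpha>" using assms(1,3) by (simp add: mult_left_mono)
  have "(\<Sum>m\<in>S1. \<phi> m) = (\<Sum>m\<in>S0. \<phi> m) + (\<Sum>m\<in>S2. \<phi> m)"
    unfolding S0_def S1_def S2_def using KA assms(1,2)
    by (intro sum_int_points_Ioc_split) (auto intro: mult_nonneg_nonneg)
  then have "complex_of_real (1/\<alpha>0) * (\<Sum>m\<in>S0. \<phi> m) - complex_of_real (1/\<alpha>) * (\<Sum>m\<in>S1. \<phi> m)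
      = complex_of_real (1/\<alpha>0 - 1/\<alpha>) * (\<Sum>m\<in>S0. \<phi> m) - complex_of_real (1/\<alpha>) * (\<Sum>m\<in>S2. \<phi> m)"
    by (simp add: algebra_simps)
  also have "norm \<dots> \<le> norm (complex_of_real (1/\<alpha>0 - 1/\<alpha>) * (\<Sum>m\<in>S0. \<phi> m))
      + norm (complex_of_real (1/\<alpha>) * (\<Sum>m\<in>S2. \<phi> m))"
    by (rule norm_triangle_ineq4)
  also have "\<dots> = \<bar>1/\<alpha>0 - 1/\<alpha>\<bar> * norm (\<Sum>m\<in>S0. \<phi> m) + (1/\<alpha>) * norm (\<Sum>m\<in>S2. \<phi> m)"
    using \<eta>(2) by (simp only: norm_mult norm_of_real) simp
  also have "\<dots> \<le> (\<eta>/\<alpha>0^2) * (K*\<alpha>0 + 1) + (1/\<alpha>0) * (K*\<eta> + 1)"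
  proof (rule add_mono)
    have "\<bar>1/\<alpha>0 - 1/\<alpha>\<bar> = (\<alpha> - \<alpha>0)/(\<alpha>0*\<alpha>)" using assms(2,3) \<eta> by (simp add: field_simps)
    also have "\<dots> \<le> \<eta>/(\<alpha>0*\<alpha>0)" using assms(2-4) \<eta> by (intro frac_le mult_mono) auto
    finally have "\<bar>1/\<alpha>0 - 1/\<alpha>\<bar> \<le> \<eta>/\<alpha>0^2" by (simp add: power2_eq_square)
    moreover have "norm (\<Sum>m\<in>S0. \<phi> m) \<le> K*\<alpha>0 + 1"
      using norm_sum_le_card[OF phi, of "\<lambda>x. x" S0] card_int_points_Ioc_le[of \<beta> "\<beta> + K*\<alpha>0"] assms(1,2)
      unfolding S0_def by simp
    ultimately show "\<bar>1/\<alpha>0 - 1/\<alpha>\<bar> * norm (\<Sum>m\<in>S0. \<phi> m) \<le> (\<eta>/\<alpha>0^2) * (K*\<alpha>0 + 1)"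
      by (intro mult_mono) auto
    have "K*\<alpha> - K*\<alpha>0 \<le> K*\<eta>"
      using mult_left_mono[of "\<alpha> - \<alpha>0" \<eta> K] assms(1,4) by (simp add: right_diff_distrib)
    then have "norm (\<Sum>m\<in>S2. \<phi> m) \<le> K*\<eta> + 1"
      using norm_sum_le_card[OF phi, of "\<lambda>x. x" S2] card_int_points_Ioc_le[OF add_left_mono[OF KA, of \<beta>]]
      unfolding S2_def by simp
    moreover have "1/\<alpha> \<le> 1/\<alpha>0" using assms(2,3) by (simp add: frac_le)
    ultimately show "(1/\<alpha>) * norm (\<Sum>m\<in>S2. \<phi> m) \<le> (1/\<alpha>0) * (K*\<eta> + 1)"
      using \<eta>(2) assms(2) by (intro mult_mono) auto
  qed
  also have "\<dots> = 2*K*\<eta>/\<alpha>0 + \<eta>/\<alpha>0^2 + 1/\<alpha>0" using assms(2) by (simp add: field_simps power2_eq_square)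
  finally show ?thesis unfolding S0_def S1_def .
qed

lemma short_disc_perturb:
  assumes K: "K \<ge> 1" and "\<alpha>0 > 0" "\<alpha>0 \<le> \<alpha>" "\<alpha> \<le> \<alpha>0 + \<eta>" and phi: "\<forall>m. norm (\<phi> m) \<le> 1"
  shows "short_disc \<phi> K \<alpha>0 \<beta> \<le> short_disc \<phi> K \<alpha> \<beta> + (2/K)*(1 + real(card {d\<in>{1..\<lfloor>K\<rfloor>}. near_int (real_of_int d*\<alpha>0) (K*\<eta>)}))
            + 2*\<eta>/\<alpha>0 + \<eta>/\<alpha>0^2 + 1/(K*\<alpha>0)"
proof -
  define X0 where "X0 = (\<Sum>n\<in>{1..\<lfloor>K\<rfloor>}. \<phi> \<lfloor>real_of_int n * \<alpha>0 + \<beta>\<rfloor>)"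
  define X where "X = (\<Sum>n\<in>{1..\<lfloor>K\<rfloor>}. \<phi> \<lfloor>real_of_int n * \<alpha> + \<beta>\<rfloor>)"
  define Y0 where "Y0 = complex_of_real (1/\<alpha>0) * (\<Sum>m\<in>{m::int. \<beta> < real_of_int m \<and> real_of_int m \<le> \<beta> + K*\<alpha>0}. \<phi> m)"
  define Y where "Y = complex_of_real (1/\<alpha>) * (\<Sum>m\<in>{m::int. \<beta> < real_of_int m \<and> real_of_int m \<le> \<beta> + K*\<alpha>}. \<phi> m)"
  define near where "near = real (card {d\<in>{1..\<lfloor>K\<rfloor>}. near_int (real_of_int d*\<alpha>0) (K*\<eta>)})"
  have \<eta>: "0 \<le> \<eta>" using assms(3,4) by linarith
  have "norm (X0 - Y0) \<le> norm (X - Y) + norm (X0 - X) + norm (Y0 - Y)"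
    using norm_triangle_ineq[of "X - Y" "(X0 - X) - (Y0 - Y)"] norm_triangle_ineq4[of "X0 - X" "Y0 - Y"]
    by (simp add: algebra_simps)
  also have "\<dots> \<le> norm (X - Y) + 2*(1 + near) + (2*K*\<eta>/\<alpha>0 + \<eta>/\<alpha>0^2 + 1/\<alpha>0)"
    using norm_floor_sum_perturb[of K \<alpha>0 \<alpha> \<eta> \<phi> \<beta>] norm_scaled_count_perturb[of K \<alpha>0 \<alpha> \<eta> \<phi> \<beta>] assms
    unfolding X0_def X_def Y0_def Y_def near_def by simp
  finally have "(1/K) * norm (X0 - Y0) \<le> (1/K) * (norm (X - Y) + 2*(1 + near) + (2*K*\<eta>/\<alpha>0 + \<eta>/\<alpha>0^2 + 1/\<alpha>0))"
    using K by (intro mult_left_mono) auto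
  also have "\<dots> = (1/K) * norm (X - Y) + (2/K)*(1 + near) + 2*\<eta>/\<alpha>0 + (\<eta>/\<alpha>0^2)/K + 1/(K*\<alpha>0)"
    using K by (simp add: field_simps)
  also have "(\<eta>/\<alpha>0^2)/K \<le> (\<eta>/\<alpha>0^2)/1" using K \<eta> by (intro divide_left_mono) auto
  finally show ?thesis
    unfolding short_disc_def X0_def X_def Y0_def Y_def near_def positive_ints_le_eq by simp
qed

lemma sup_disc_perturb:
  assumes K: "K \<ge> 1" and a0: "\<alpha>0 > 0" and aa: "\<alpha>0 \<le> \<alpha>" "\<alpha> \<le> \<alpha>0 + \<eta>"
    and phi: "\<forall>m. norm (\<phi> m) \<le> 1" and pq: "p < q"
  shows "sup_disc \<phi> K p q \<alpha>0 \<le> sup_disc \<phi> K p q \<alpha> + (2/K)*(1 + real(card {d\<in>{1..\<lfloor>K\<rfloor>}. near_int (real_of_int d*\<alpha>0) (K*\<eta>)}))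
            + 2*\<eta>/\<alpha>0 + \<eta>/\<alpha>0^2 + 1/(K*\<alpha>0)"
proof -
  have Kpos: "K > 0" using K by simp
  have apos: "\<alpha> > 0" using a0 aa by linarith
  show ?thesis unfolding sup_disc_def[of _ _ _ _ \<alpha>0]
  proof (rule cSUP_least)
    show "{p<..q} \<noteq> {}" using pq by auto
    fix \<beta> assume "\<beta> \<in> {p<..q}"
    then have "short_disc \<phi> K \<alpha> \<beta> \<le> sup_disc \<phi> K p q \<alpha>" using short_disc_le_sup_disc[OF Kpos apos phi] by auto
    then show "short_disc \<phi> K \<alpha>0 \<beta> \<le> sup_disc \<phi> K p q \<alpha> + (2/K)*(1 + real(card {d\<in>{1..\<lfloor>K\<rfloor>}. near_int (real_of_int d*\<alpha>0) (K*\<eta>)}))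
            + 2*\<eta>/\<alpha>0 + \<eta>/\<alpha>0^2 + 1/(K*\<alpha>0)"
      using short_disc_perturb[OF K a0 aa phi, of \<beta>] by linarith
  qed
qed

text \<open>Since \<open>short_disc\<close> is locally constant to the right in \<open>\<beta>\<close>, the supremum defining
  \<open>sup_disc\<close> may be taken over a countable set, which makes \<open>sup_disc\<close> Borel measurable.\<close>

lemma short_disc_locally_const_right:
  assumes K: "K > 0"
  shows "\<exists>\<rho>>0. \<forall>\<beta>'. \<beta> \<le> \<beta>' \<and> \<beta>' < \<beta> + \<rho> \<longrightarrow> short_disc \<phi> K \<alpha> \<beta>' = short_disc \<phi> K \<alpha> \<beta>"
proof -
  define C where "C = (\<lambda>n. real_of_int n * \<alpha>) ` {1..\<lfloor>K\<rfloor>} \<union> {0, K*\<alpha>}"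
  define \<rho> where "\<rho> = Min ((\<lambda>c. real_of_int \<lfloor>\<beta>+c\<rfloor> + 1 - (\<beta>+c)) ` C)"
  have finC: "finite C" "C \<noteq> {}" unfolding C_def by auto
  have rpos: "\<rho> > 0" unfolding \<rho>_def using finC
    by (subst Min_gr_iff) (auto simp: real_of_int_floor_add_one_gt)
  have fl: "\<lfloor>\<beta>'+c\<rfloor> = \<lfloor>\<beta>+c\<rfloor>" if c: "c \<in> C" and b: "\<beta> \<le> \<beta>'" "\<beta>' < \<beta> + \<rho>" for c \<beta>'
  proof (rule floor_unique)
    show "real_of_int \<lfloor>\<beta>+c\<rfloor> \<le> \<beta>'+c" using b of_int_floor_le[of "\<beta>+c"] by linarith
    have "\<rho> \<le> real_of_int \<lfloor>\<beta>+c\<rfloor> + 1 - (\<beta>+c)" unfolding \<rho>_def using finC c by (intro Min_le) auto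
    then show "\<beta>'+c < real_of_int \<lfloor>\<beta>+c\<rfloor> + 1" using b by linarith
  qed
  show ?thesis
  proof (intro exI[of _ \<rho>] conjI allI impI rpos)
    fix \<beta>' assume b: "\<beta> \<le> \<beta>' \<and> \<beta>' < \<beta> + \<rho>"
    have s1: "(\<Sum>n\<in>{1..\<lfloor>K\<rfloor>}. \<phi> \<lfloor>real_of_int n * \<alpha> + \<beta>'\<rfloor>) = (\<Sum>n\<in>{1..\<lfloor>K\<rfloor>}. \<phi> \<lfloor>real_of_int n * \<alpha> + \<beta>\<rfloor>)"
    proof (rule sum.cong[OF refl])
      fix n assume "n \<in> {1..\<lfloor>K\<rfloor>}"
      then have "real_of_int n * \<alpha> \<in> C" unfolding C_def by auto
      then show "\<phi> \<lfloor>real_of_int n * \<alpha> + \<beta>'\<rfloor> = \<phi> \<lfloor>real_of_int n * \<alpha> + \<beta>\<rfloor>"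
        using fl[of "real_of_int n * \<alpha>" \<beta>'] b by (simp add: add.commute)
    qed
    have "0 \<in> C" "K*\<alpha> \<in> C" unfolding C_def by auto
    then have f0: "\<lfloor>\<beta>'\<rfloor> = \<lfloor>\<beta>\<rfloor>" and f1: "\<lfloor>\<beta>' + K*\<alpha>\<rfloor> = \<lfloor>\<beta> + K*\<alpha>\<rfloor>"
      using fl[of 0 \<beta>'] fl[of "K*\<alpha>" \<beta>'] b by auto
    show "short_disc \<phi> K \<alpha> \<beta>' = short_disc \<phi> K \<alpha> \<beta>"
      unfolding short_disc_def positive_ints_le_eq int_points_Ioc_eq s1 f0 f1 ..
  qed
qed

definition rat_grid :: "real \<Rightarrow> real \<Rightarrow> real set" where
  "rat_grid p q = (\<rat> \<inter> {p<..<q}) \<union> {q}"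

lemma rat_grid_subset: "p < q \<Longrightarrow> rat_grid p q \<subseteq> {p<..q}"
  unfolding rat_grid_def by auto

lemma countable_rat_grid: "countable (rat_grid p q)"
  unfolding rat_grid_def by (intro countable_Un countable_Int1 countable_rat) simp

lemma sup_disc_eq_SUP_rat_grid:
  assumes K: "K > 0" and a: "\<alpha> > 0" and phi: "\<forall>m. norm (\<phi> m) \<le> 1" and pq: "p < q"
  shows "sup_disc \<phi> K p q \<alpha> = (SUP \<beta>\<in>rat_grid p q. short_disc \<phi> K \<alpha> \<beta>)"
proof (rule antisym)
  have ne: "rat_grid p q \<noteq> {}" unfolding rat_grid_def by auto
  show "(SUP \<beta>\<in>rat_grid p q. short_disc \<phi> K \<alpha> \<beta>) \<le> sup_disc \<phi> K p q \<alpha>"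
    unfolding sup_disc_def by (rule cSUP_subset_mono[OF ne bdd_above_short_disc[OF K a phi] rat_grid_subset[OF pq] order_refl])
  show "sup_disc \<phi> K p q \<alpha> \<le> (SUP \<beta>\<in>rat_grid p q. short_disc \<phi> K \<alpha> \<beta>)"
    unfolding sup_disc_def
  proof (rule cSUP_least)
    show "{p<..q} \<noteq> {}" using pq by auto
    fix \<beta> assume b: "\<beta> \<in> {p<..q}"
    show "short_disc \<phi> K \<alpha> \<beta> \<le> (SUP \<beta>\<in>rat_grid p q. short_disc \<phi> K \<alpha> \<beta>)"
    proof (cases "\<beta> = q")
      case True
      then show ?thesis unfolding rat_grid_def by (intro cSUP_upper bdd_above_short_disc[OF K a phi]) auto
    next
      case False
      then have bq: "\<beta> < q" using b by auto
      obtain \<rho> where r: "\<rho> > 0" "\<forall>\<beta>'. \<beta> \<le> \<beta>' \<and> \<beta>' < \<beta> + \<rho> \<longrightarrow> short_disc \<phi> K \<alpha> \<beta>' = short_disc \<phi> K \<alpha> \<beta>"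
        using short_disc_locally_const_right[OF K, of \<beta> \<phi> \<alpha>] by (elim exE conjE) (rule that)
      obtain r' where r': "r' \<in> \<rat>" "\<beta> < r'" "r' < min (\<beta>+\<rho>) q"
        using Rats_dense_in_real[of \<beta> "min (\<beta>+\<rho>) q"] r(1) bq by auto
      have "short_disc \<phi> K \<alpha> r' = short_disc \<phi> K \<alpha> \<beta>" using r(2)[rule_format, of r'] r' by simp
      moreover have "r' \<in> rat_grid p q" unfolding rat_grid_def using r' b by simp
      moreover note cSUP_upper[OF \<open>r' \<in> rat_grid p q\<close> bdd_above_short_disc[OF K a phi]]
      ultimately show ?thesis by simp
    qed
  qed
qed

text \<open>The same quantity with the range of \<open>m\<close> cut out of a fixed finite window, so that
  the dependence on \<open>\<alpha>\<close> is visibly measurable.\<close>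

definition short_disc_window :: "(int \<Rightarrow> complex) \<Rightarrow> real \<Rightarrow> int set \<Rightarrow> real \<Rightarrow> real \<Rightarrow> real" where
  "short_disc_window \<phi> K R0 \<alpha> \<beta> = (1 / K) * norm ((\<Sum>n\<in>{1..\<lfloor>K\<rfloor>}. \<phi> \<lfloor>real_of_int n * \<alpha> + \<beta>\<rfloor>)
              - complex_of_real (1 / \<alpha>) *
                (\<Sum>m\<in>R0. if \<beta> < real_of_int m \<and> real_of_int m \<le> \<beta> + K * \<alpha> then \<phi> m else 0))"

lemma measurable_comp_floor:
  fixes \<phi> :: "int \<Rightarrow> complex" and g :: "real \<Rightarrow> real"
  assumes "g \<in> borel_measurable borel"
  shows "(\<lambda>\<alpha>. \<phi> \<lfloor>g \<alpha>\<rfloor>) \<in> borel_measurable borel"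
proof -
  have "(\<lambda>\<alpha>. \<lfloor>g \<alpha>\<rfloor>) \<in> measurable borel (count_space UNIV)"
    using measurable_compose[OF assms measurable_real_floor] by (simp add: comp_def)
  moreover have "\<phi> \<in> measurable (count_space UNIV) borel" by simp
  ultimately show ?thesis using measurable_compose by blast
qed

lemma measurable_window_indicator:
  fixes c :: complex
  shows "(\<lambda>\<alpha>::real. if \<beta> < x \<and> x \<le> \<beta> + K * \<alpha> then c else 0) \<in> borel_measurable borel"
proof (rule measurable_If)
  show "{\<alpha>::real \<in> space borel. \<beta> < x \<and> x \<le> \<beta> + K * \<alpha>} \<in> sets borel"
    by measurable
qed auto

lemma short_disc_window_measurable: "(\<lambda>\<alpha>. short_disc_window \<phi> K R0 \<alpha> \<beta>) \<in> borel_measurable borel"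
proof -
  have m1: "(\<lambda>\<alpha>. \<Sum>n\<in>{1..\<lfloor>K\<rfloor>}. \<phi> \<lfloor>real_of_int n * \<alpha> + \<beta>\<rfloor>) \<in> borel_measurable borel"
  proof (rule borel_measurable_sum)
    fix n :: int
    have "(\<lambda>\<alpha>::real. real_of_int n * \<alpha> + \<beta>) \<in> borel_measurable borel"
      by (rule borel_measurable_continuous_onI) (intro continuous_intros)
    then show "(\<lambda>\<alpha>. \<phi> \<lfloor>real_of_int n * \<alpha> + \<beta>\<rfloor>) \<in> borel_measurable borel" by (rule measurable_comp_floor)
  qed
  have m2: "(\<lambda>\<alpha>. \<Sum>m\<in>R0. if \<beta> < real_of_int m \<and> real_of_int m \<le> \<beta> + K * \<alpha> then \<phi> m else 0) \<in> borel_measurable borel"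
    by (intro borel_measurable_sum measurable_window_indicator)
  have m0: "(\<lambda>\<alpha>::real. 1 / \<alpha>) \<in> borel_measurable borel"
    by (rule borel_measurable_divide) (auto intro: measurable_ident_sets)
  have m3: "(\<lambda>\<alpha>. complex_of_real (1 / \<alpha>)) \<in> borel_measurable borel"
    using measurable_compose[OF m0 borel_measurable_of_real] .
  have m4: "(\<lambda>\<alpha>. (\<Sum>n\<in>{1..\<lfloor>K\<rfloor>}. \<phi> \<lfloor>real_of_int n * \<alpha> + \<beta>\<rfloor>) - complex_of_real (1 / \<alpha>) *
                (\<Sum>m\<in>R0. if \<beta> < real_of_int m \<and> real_of_int m \<le> \<beta> + K * \<alpha> then \<phi> m else 0)) \<in> borel_measurable borel"
    by (rule borel_measurable_diff[OF m1 borel_measurable_times[OF m3 m2]])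
  note m5 = measurable_compose[OF m4 borel_measurable_norm]
  show ?thesis unfolding short_disc_window_def
    by (rule borel_measurable_times[OF borel_measurable_const m5])
qed

lemma short_disc_window_le:
  assumes K: "K > 0" and phi: "\<forall>m. norm (\<phi> m) \<le> 1"
  shows "short_disc_window \<phi> K R0 \<alpha> \<beta> \<le> (1/K) * (real (card {1..\<lfloor>K\<rfloor>}) + \<bar>1/\<alpha>\<bar> * real (card R0))"
proof -
  let ?X = "(\<Sum>n\<in>{1..\<lfloor>K\<rfloor>}. \<phi> \<lfloor>real_of_int n * \<alpha> + \<beta>\<rfloor>)"
  let ?Y = "(\<Sum>m\<in>R0. if \<beta> < real_of_int m \<and> real_of_int m \<le> \<beta> + K * \<alpha> then \<phi> m else 0)"
  have nX: "norm ?X \<le> real (card {1..\<lfloor>K\<rfloor>})" by (rule norm_sum_le_card[OF phi])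
  have "norm ?Y \<le> (\<Sum>m\<in>R0. norm (if \<beta> < real_of_int m \<and> real_of_int m \<le> \<beta> + K * \<alpha> then \<phi> m else 0))"
    by (rule norm_sum)
  also have "\<dots> \<le> real (card R0) * 1" by (rule sum_bounded_above) (use phi in auto)
  finally have nY: "norm ?Y \<le> real (card R0)" by simp
  have "norm (?X - complex_of_real (1/\<alpha>) * ?Y) \<le> norm ?X + norm (complex_of_real (1/\<alpha>) * ?Y)"
    by (rule norm_triangle_ineq4)
  also have "norm (complex_of_real (1/\<alpha>) * ?Y) = \<bar>1/\<alpha>\<bar> * norm ?Y" by (simp only: norm_mult norm_of_real)
  also have "\<bar>1/\<alpha>\<bar> * norm ?Y \<le> \<bar>1/\<alpha>\<bar> * real (card R0)" using nY by (intro mult_left_mono) auto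
  finally have "norm (?X - complex_of_real (1/\<alpha>) * ?Y) \<le> real (card {1..\<lfloor>K\<rfloor>}) + \<bar>1/\<alpha>\<bar> * real (card R0)"
    using nX by linarith
  then show ?thesis unfolding short_disc_window_def using K by (intro mult_left_mono) auto
qed

lemma short_disc_window_eq:
  assumes K: "K > 0" and a: "0 < \<alpha>" "\<alpha> \<le> \<alpha>h" and b: "p < \<beta>" "\<beta> \<le> q"
  shows "short_disc_window \<phi> K {m::int. p < real_of_int m \<and> real_of_int m \<le> q + K*\<alpha>h} \<alpha> \<beta> = short_disc \<phi> K \<alpha> \<beta>"
proof -
  let ?R0 = "{m::int. p < real_of_int m \<and> real_of_int m \<le> q + K*\<alpha>h}"
  have fin: "finite ?R0" by (rule finite_int_points_Ioc)
  have KA: "K*\<alpha> \<le> K*\<alpha>h" using K a by simp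
  have "{m \<in> ?R0. \<beta> < real_of_int m \<and> real_of_int m \<le> \<beta> + K * \<alpha>} = {m::int. \<beta> < real_of_int m \<and> real_of_int m \<le> \<beta> + K * \<alpha>}"
    using b KA by auto
  then have "(\<Sum>m\<in>?R0. if \<beta> < real_of_int m \<and> real_of_int m \<le> \<beta> + K * \<alpha> then \<phi> m else 0) =
             (\<Sum>m\<in>{m::int. \<beta> < real_of_int m \<and> real_of_int m \<le> \<beta> + K * \<alpha>}. \<phi> m)"
    using sum.inter_filter[OF fin, of \<phi> "\<lambda>m. \<beta> < real_of_int m \<and> real_of_int m \<le> \<beta> + K * \<alpha>"] by simp
  then show ?thesis unfolding short_disc_window_def short_disc_def positive_ints_le_eq by simp
qed

lemma sup_disc_integrable:
  assumes K: "K > 0" and al: "\<alpha>l > 0" "\<alpha>l \<le> \<alpha>h" and phi: "\<forall>m. norm (\<phi> m) \<le> 1" and pq: "p < q"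
  shows "sup_disc \<phi> K p q integrable_on {\<alpha>l..\<alpha>h}"
proof -
  define R0 where "R0 = {m::int. p < real_of_int m \<and> real_of_int m \<le> q + K*\<alpha>h}"
  define G where "G \<alpha> = (SUP \<beta>\<in>rat_grid p q. short_disc_window \<phi> K R0 \<alpha> \<beta>)" for \<alpha>
  have eq: "sup_disc \<phi> K p q \<alpha> = G \<alpha>" if "\<alpha> \<in> {\<alpha>l..\<alpha>h}" for \<alpha>
  proof -
    have a: "0 < \<alpha>" "\<alpha> \<le> \<alpha>h" using that al by auto
    have "sup_disc \<phi> K p q \<alpha> = (SUP \<beta>\<in>rat_grid p q. short_disc \<phi> K \<alpha> \<beta>)" by (rule sup_disc_eq_SUP_rat_grid[OF K a(1) phi pq])
    also have "\<dots> = G \<alpha>" unfolding G_def R0_def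
    proof (rule SUP_cong[OF refl])
      fix \<beta> assume "\<beta> \<in> rat_grid p q"
      then have "p < \<beta>" "\<beta> \<le> q" using rat_grid_subset[OF pq] by auto
      then show "short_disc \<phi> K \<alpha> \<beta> = short_disc_window \<phi> K {m::int. p < real_of_int m \<and> real_of_int m \<le> q + K*\<alpha>h} \<alpha> \<beta>"
        using short_disc_window_eq[OF K a] by simp
    qed
    finally show ?thesis .
  qed
  have Gm: "G \<in> borel_measurable borel" unfolding G_def
  proof (rule borel_measurable_cSUP[OF countable_rat_grid short_disc_window_measurable])
    fix \<alpha> :: real
    show "bdd_above ((\<lambda>\<beta>. short_disc_window \<phi> K R0 \<alpha> \<beta>) ` rat_grid p q)"
      by (rule bdd_aboveI2[OF short_disc_window_le[OF K phi]])
  qed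
  have GmS: "G \<in> borel_measurable (lebesgue_on {\<alpha>l..\<alpha>h})"
    using measurable_comp[OF id_borel_measurable_lebesgue_on Gm] by (simp add: comp_def)
  define Bd where "Bd = 2 + 1/(K*\<alpha>l)"
  have bnd: "\<bar>G \<alpha>\<bar> \<le> Bd" if "\<alpha> \<in> {\<alpha>l..\<alpha>h}" for \<alpha>
  proof -
    have a: "0 < \<alpha>" "\<alpha>l \<le> \<alpha>" using that al by auto
    have "0 \<le> sup_disc \<phi> K p q \<alpha>" by (rule sup_disc_nonneg[OF K a(1) phi pq])
    moreover have "sup_disc \<phi> K p q \<alpha> \<le> 2 + 1/(K*\<alpha>)" by (rule sup_disc_le[OF K a(1) phi pq])
    moreover have "1/(K*\<alpha>) \<le> 1/(K*\<alpha>l)" using K a al by (intro divide_left_mono mult_left_mono) auto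
    ultimately show ?thesis using eq[OF that] unfolding Bd_def by linarith
  qed
  have "G integrable_on {\<alpha>l..\<alpha>h}"
    by (rule measurable_bounded_by_integrable_imp_integrable_real[OF GmS integrable_const_ivl bnd]) auto
  then show ?thesis by (rule integrable_eq) (use eq in auto)
qed

lemma integral_sum_blocks:
  fixes u :: "int \<Rightarrow> real" and D :: "real \<Rightarrow> real"
  assumes mono: "\<And>s t. p \<le> s \<Longrightarrow> s \<le> t \<Longrightarrow> u s \<le> u t"
    and int: "D integrable_on {u p..u q0}" and pq: "p \<le> q" "q \<le> q0"
  shows "(\<Sum>t\<in>{p..<q}. integral {u t..u (t+1)} D) = integral {u p..u q} D"
  using pq
proof (induction q rule: int_ge_induct)
  case base then show ?case by simp
next
  case (step q)
  have "{p..<q+1} = insert q {p..<q}" using step by auto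
  then have "(\<Sum>t\<in>{p..<q+1}. integral {u t..u (t+1)} D) = integral {u q..u (q+1)} D + integral {u p..u q} D"
    using step by simp
  also have "\<dots> = integral {u p..u (q+1)} D"
  proof -
    have i: "D integrable_on {u p..u (q+1)}"
      by (rule integrable_subinterval_real[OF int]) (use mono step in auto)
    show ?thesis using Henstock_Kurzweil_Integration.integral_combine[OF _ _ i, of "u q"] mono[of p q] mono[of q "q+1"] step by simp
  qed
  finally show ?case .
qed

lemma le_integral_div_length:
  fixes D :: "real \<Rightarrow> real"
  assumes "D integrable_on {x0..x1}" and "\<And>x. x \<in> {x0..x1} \<Longrightarrow> 0 \<le> D x"
    and "\<And>x. x \<in> {x0..x1} \<Longrightarrow> c \<le> D x" and "0 < l" "l \<le> x1 - x0"
  shows "c \<le> integral {x0..x1} D / l"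
proof (cases "c \<le> 0")
  case True
  have "0 \<le> integral {x0..x1} D" using assms(1,2) by (rule integral_nonneg)
  then show ?thesis using True \<open>0 < l\<close> by (smt (verit) divide_nonneg_pos)
next
  case False
  have "integral {x0..x1} (\<lambda>_. c) \<le> integral {x0..x1} D"
    using assms(1,3) by (intro integral_le integrable_const_ivl) auto
  then have "(x1 - x0) * c \<le> integral {x0..x1} D" using assms(4,5) by simp
  moreover have "l * c \<le> (x1 - x0) * c" using False assms(5) by (intro mult_right_mono) auto
  ultimately show ?thesis using \<open>0 < l\<close> by (simp add: le_divide_eq mult.commute)
qed

lemma diff_bounds_from_deriv_bounds:
  fixes g g' :: "real \<Rightarrow> real"
  assumes der: "\<And>z. z > 0 \<Longrightarrow> (g has_real_derivative g' z) (at z)"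
    and x: "0 < x" "x \<le> y" and LU: "\<And>z. x \<le> z \<Longrightarrow> z \<le> y \<Longrightarrow> L \<le> g' z \<and> g' z \<le> U"
  shows "L*(y-x) \<le> g y - g x \<and> g y - g x \<le> U*(y-x)"
proof (cases "x = y")
  case True then show ?thesis by simp
next
  case False
  then have xy: "x < y" using x by simp
  obtain z where z: "x < z" "z < y" "g y - g x = (y - x) * g' z"
    using MVT2[OF xy, of g g'] der x by force
  have "L \<le> g' z" "g' z \<le> U" using LU[of z] z by auto
  then show ?thesis using z(3) xy by (simp add: mult.commute mult_right_mono)
qed

locale convex_doubling =
  fixes f f' f'' :: "real \<Rightarrow> real" and c1 c2 :: real
  assumes df: "\<And>x. x > 0 \<Longrightarrow> (f has_real_derivative f' x) (at x)"
    and df': "\<And>x. x > 0 \<Longrightarrow> (f' has_real_derivative f'' x) (at x)"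
    and f'pos: "\<And>x. x > 0 \<Longrightarrow> f' x > 0"
    and f''pos: "\<And>x. x > 0 \<Longrightarrow> f'' x > 0"
    and c1: "c1 \<ge> 1/2" and c2: "c2 > 0"
    and doubling: "\<And>x y. 0 < x \<Longrightarrow> x \<le> y \<Longrightarrow> y \<le> 2*x \<Longrightarrow>
                     c1 * f'' x \<le> f'' y \<and> f'' y \<le> c2 * f'' x"
begin

lemma c1_le1: "c1 \<le> 1"
  using doubling[of 1 1] f''pos[of 1] by simp

lemma c2_ge1: "c2 \<ge> 1"
  using doubling[of 1 1] f''pos[of 1] by simp

lemma f'_diff_bounds: "0 < x \<Longrightarrow> x \<le> y \<Longrightarrow> (\<And>z. x \<le> z \<Longrightarrow> z \<le> y \<Longrightarrow> L \<le> f'' z \<and> f'' z \<le> U) \<Longrightarrow>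
   L*(y-x) \<le> f' y - f' x \<and> f' y - f' x \<le> U*(y-x)"
  by (rule diff_bounds_from_deriv_bounds[OF df'])

lemma f_diff_bounds: "0 < x \<Longrightarrow> x \<le> y \<Longrightarrow> (\<And>z. x \<le> z \<Longrightarrow> z \<le> y \<Longrightarrow> L \<le> f' z \<and> f' z \<le> U) \<Longrightarrow>
   L*(y-x) \<le> f y - f x \<and> f y - f x \<le> U*(y-x)"
  by (rule diff_bounds_from_deriv_bounds[OF df])

lemma f'_strict: assumes "0 < x" "x < y" shows "f' x < f' y"
proof -
  obtain z where z: "x < z" "z < y" "f' y - f' x = (y - x) * f'' z"
    using MVT2[OF assms(2), of f' f''] df' assms by force
  have "(y - x) * f'' z > 0" using f''pos[of z] z assms by (intro mult_pos_pos) auto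
  then show ?thesis using z(3) by linarith
qed

lemma f'_mono: "0 < x \<Longrightarrow> x \<le> y \<Longrightarrow> f' x \<le> f' y"
  using f'_strict by (cases "x = y") (auto intro: less_imp_le)

lemma f_strict: assumes "0 < x" "x < y" shows "f x < f y"
proof -
  obtain z where z: "x < z" "z < y" "f y - f x = (y - x) * f' z"
    using MVT2[OF assms(2), of f f'] df assms by force
  have "(y - x) * f' z > 0" using f'pos[of z] z assms by (intro mult_pos_pos) auto
  then show ?thesis using z(3) by linarith
qed

lemma f_mono: "0 < x \<Longrightarrow> x \<le> y \<Longrightarrow> f x \<le> f y"
  using f_strict by (cases "x = y") (auto intro: less_imp_le)

lemma x_f''_ge_m0_pow2: "\<forall>x. 1 \<le> x \<and> x \<le> 2^n \<longrightarrow> c1 * f'' 1 \<le> x * f'' x"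
proof (induction n)
  case 0
  show ?case using c1_le1 f''pos[of 1] by (auto simp: mult_right_mono)
next
  case (Suc n)
  show ?case
  proof (intro allI impI)
    fix x :: real assume x: "1 \<le> x \<and> x \<le> 2^Suc n"
    show "c1 * f'' 1 \<le> x * f'' x"
    proof (cases "x \<le> 2")
      case True
      have "c1 * f'' 1 \<le> f'' x" using doubling[of 1 x] x True by simp
      also have "f'' x \<le> x * f'' x" using x f''pos[of x] by (simp add: mult_le_cancel_right1)
      finally show ?thesis .
    next
      case False
      have h: "1 \<le> x/2 \<and> x/2 \<le> 2^n" using x False by auto
      have "c1 * f'' 1 \<le> (x/2) * f'' (x/2)" using Suc.IH h by blast
      also have "f'' (x/2) \<le> 2 * f'' x"
      proof -
        have "c1 * f'' (x/2) \<le> f'' x" using doubling[of "x/2" x] x by simp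
        moreover have "(1/2) * f'' (x/2) \<le> c1 * f'' (x/2)" using c1 f''pos[of "x/2"] x
          by (intro mult_right_mono) auto
        ultimately show ?thesis by linarith
      qed
      then have "(x/2) * f'' (x/2) \<le> (x/2) * (2 * f'' x)" using x by (intro mult_left_mono) auto
      finally show ?thesis by simp
    qed
  qed
qed

definition m0 where "m0 = c1 * f'' 1"

lemma m0_pos: "m0 > 0" unfolding m0_def using c1 f''pos[of 1] by simp

lemma x_f''_ge_m0: assumes "1 \<le> x" shows "m0 \<le> x * f'' x"
proof -
  obtain n where "x < 2^n" using real_arch_pow[of 2 x] by auto
  then show ?thesis using x_f''_ge_m0_pow2[of n] assms unfolding m0_def by auto
qed

text \<open>The main argument is run when \<open>f'' A * K^2 \<le> \<theta>\<close>; this forces \<open>K^2 \<le> A\<close> and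
  \<open>f'' A * K^2 \<le> 1\<close>.\<close>

definition "\<theta> = min 1 m0"
definition "lo = c1^2"
definition "hi = c2^2"
definition "F2 = f' 2"
definition "BV = 1 + (hi + 1) / F2"

lemma theta_pos: "\<theta> > 0" unfolding \<theta>_def using m0_pos by simp
lemma lo_pos: "lo > 0" unfolding lo_def using c1 by simp
lemma hi_ge1: "hi \<ge> 1" unfolding hi_def using c2_ge1 by (simp add: one_le_power)
lemma F2_pos: "F2 > 0" unfolding F2_def using f'pos by simp
lemma BV_nonneg: "0 \<le> BV" unfolding BV_def using hi_ge1 F2_pos by simp

lemma f''_window_bounds:
  assumes A: "0 < A" and y: "A \<le> y" "y \<le> 4*A"
  shows "c1^2 * f'' A \<le> f'' y \<and> f'' y \<le> c2^2 * f'' A"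
proof (cases "y \<le> 2*A")
  case True
  have d: "c1 * f'' A \<le> f'' y \<and> f'' y \<le> c2 * f'' A" using doubling[of A y] A y True by simp
  have "c1^2 * f'' A \<le> c1 * f'' A" using c1 c1_le1 f''pos[OF A] by (simp add: power2_eq_square mult_le_cancel_right1)
  moreover have "c2 * f'' A \<le> c2^2 * f'' A" using c2_ge1 f''pos[OF A] by (simp add: power2_eq_square mult_le_cancel_right1)
  ultimately show ?thesis using d by linarith
next
  case False
  have d1: "c1 * f'' A \<le> f'' (2*A) \<and> f'' (2*A) \<le> c2 * f'' A" using doubling[of A "2*A"] A by simp
  have d2: "c1 * f'' (2*A) \<le> f'' y \<and> f'' y \<le> c2 * f'' (2*A)" using doubling[of "2*A" y] A y False by simp
  have "c1^2 * f'' A = c1 * (c1 * f'' A)" by (simp add: power2_eq_square)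
  also have "\<dots> \<le> c1 * f'' (2*A)" using d1 c1 by (intro mult_left_mono) auto
  also have "\<dots> \<le> f'' y" using d2 by simp
  finally have l: "c1^2 * f'' A \<le> f'' y" .
  have "f'' y \<le> c2 * f'' (2*A)" using d2 by simp
  also have "\<dots> \<le> c2 * (c2 * f'' A)" using d1 c2 by (intro mult_left_mono) auto
  also have "\<dots> = c2^2 * f'' A" by (simp add: power2_eq_square)
  finally show ?thesis using l by simp
qed

lemma taylor_bounds:
  assumes x: "0 < x" "x \<le> y" and U: "\<And>z. x \<le> z \<Longrightarrow> z \<le> y \<Longrightarrow> f'' z \<le> U"
  shows "0 \<le> f y - f x - (y-x) * f' x \<and> f y - f x - (y-x) * f' x \<le> (y-x)^2 * U"
proof -
  have U0: "0 \<le> U" using U[of x] x f''pos[of x] by simp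
  have b: "f' x \<le> f' z \<and> f' z \<le> f' x + (y-x)*U" if z: "x \<le> z" "z \<le> y" for z
  proof -
    have "0*(z-x) \<le> f' z - f' x \<and> f' z - f' x \<le> U*(z-x)"
      using f'_diff_bounds[of x z 0 U] x z U f''pos by (smt (verit, best))
    moreover have "U*(z-x) \<le> U*(y-x)" using z U0 by (intro mult_left_mono) auto
    ultimately show ?thesis by (simp add: algebra_simps)
  qed
  have "f' x * (y-x) \<le> f y - f x \<and> f y - f x \<le> (f' x + (y-x)*U) * (y-x)"
    by (rule f_diff_bounds[OF x]) (use b in auto)
  then show ?thesis by (simp add: algebra_simps power2_eq_square)
qed

lemma f_isCont: "0 < x \<Longrightarrow> isCont f x"
  using df DERIV_isCont by blast

lemma f_inj: "inj_on f {0<..}"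
proof (rule inj_onI)
  fix x y assume "x \<in> {0<..}" "y \<in> {0<..}" "f x = f y"
  then show "x = y" using f_strict[of x y] f_strict[of y x] by (cases x y rule: linorder_cases) auto
qed

lemma f_ivt:
  assumes "0 < u" "u \<le> v" "f u \<le> y" "y \<le> f v"
  shows "\<exists>x. u \<le> x \<and> x \<le> v \<and> f x = y"
proof (rule IVT'[OF assms(3,4,2)])
  show "continuous_on {u..v} f" using f_isCont assms(1)
    by (intro continuous_at_imp_continuous_on) auto
qed

lemma inv_into_f_eq_self: "0 < x \<Longrightarrow> inv_into {0<..} f (f x) = x"
  using inv_into_f_eq[OF f_inj] by simp

lemma deriv_inv_into_eq:
  assumes u: "0 < u" "u \<le> v" and m: "f u < m" "m \<le> f v"
  shows "\<exists>x. u < x \<and> x \<le> v \<and> f x = m \<and> deriv (inv_into {0<..} f) m = 1 / f' x"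
proof -
  define g where "g = inv_into {0<..} f"
  have "\<exists>x. u \<le> x \<and> x \<le> v \<and> f x = m" using f_ivt[OF u, of m] m by simp
  then obtain x where x: "u \<le> x" "x \<le> v" "f x = m" by blast
  have ux: "u < x" using x m by (cases "u = x") auto
  have xpos: "0 < x" using ux u by simp
  have gm: "g m = x" unfolding g_def using inv_into_f_eq_self[OF xpos] x by simp
  have "DERIV g m :> inverse (f' x)"
  proof (rule DERIV_inverse_function[where a="f u" and b="f (v+1)"])
    show "DERIV f (g m) :> f' x" using gm df[OF xpos] by simp
    show "f' x \<noteq> 0" using f'pos[OF xpos] by simp
    show "f u < m" using m by simp
    show "m < f (v+1)" using m f_strict[of v "v+1"] u by simp
    fix y assume y: "f u < y" "y < f (v+1)"
    obtain z where z: "u \<le> z" "z \<le> v+1" "f z = y" using f_ivt[of u "v+1" y] u y by force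
    have "g y = z" unfolding g_def using inv_into_f_eq_self[of z] z u by simp
    then show "f (g y) = y" using z by simp
  next
    have "isCont g (f x)"
    proof (rule isCont_inverse_function[where d="x/2" and f=f and g=g and x=x])
      show "0 < x/2" using xpos by simp
      fix z assume "\<bar>z - x\<bar> \<le> x/2"
      then have zp: "0 < z" using xpos by linarith
      show "g (f z) = z" unfolding g_def using inv_into_f_eq_self[OF zp] .
      show "isCont f z" using f_isCont[OF zp] .
    qed
    then show "isCont g m" using x by simp
  qed
  then have "deriv g m = inverse (f' x)" by (rule DERIV_imp_deriv)
  then show ?thesis using ux x unfolding g_def by (intro exI[of _ x]) (simp add: divide_inverse)
qed

definition "QX = 2*hi^2/lo + hi + (2*hi+1)*2*hi/(lo*m0) + (2*hi+1)/m0"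
definition "E4X = 2*hi/F2 + hi/F2^2"
definition "Cx = 2/m0 + 4*QX + 4*E4X + (2+1/F2)/m0 + 2*E4X + 2*BV/m0 + 2*BV/m0"
definition "Ck = 16 + 4/F2 + 4/F2 + 4*BV"
definition "CI = 2*hi/lo"

definition "B0 = 5/2 + 2*c2^2 + 1/(2*F2)"

definition avg_error :: "(int \<Rightarrow> complex) \<Rightarrow> real \<Rightarrow> real" where
  "avg_error \<phi> A = (1 / A) * norm ((\<Sum>n\<in>{n::int. A < real_of_int n \<and> real_of_int n \<le> 2*A}. \<phi> \<lfloor>f (real_of_int n)\<rfloor>)
              - (\<Sum>m\<in>{m::int. f A < real_of_int m \<and> real_of_int m \<le> f (2*A)}.
                   \<phi> m * complex_of_real (deriv (inv_into {0<..} f) (real_of_int m))))"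

lemma f'_double_le: assumes "0 < A" shows "f' (2*A) \<le> (1 + 2*c2^2) * f' A"
proof -
  have "0*(2*A - A) \<le> f' (2*A) - f' A \<and> f' (2*A) - f' A \<le> (c2 * f'' A)*(2*A - A)"
  proof (rule f'_diff_bounds)
    fix z assume z: "A \<le> z" "z \<le> 2*A"
    then show "0 \<le> f'' z \<and> f'' z \<le> c2 * f'' A" using doubling[of A z] f''pos[of z] assms by simp
  qed (use assms in auto)
  then have up: "f' (2*A) \<le> f' A + c2 * f'' A * A" by simp
  have "(f'' A / c2)*(A - A/2) \<le> f' A - f' (A/2) \<and> f' A - f' (A/2) \<le> (c2 * f'' (A/2))*(A - A/2)"
  proof (rule f'_diff_bounds)
    fix z assume z: "A/2 \<le> z" "z \<le> A"
    have "f'' A \<le> c2 * f'' z" using doubling[of z A] z assms by simp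
    then have "f'' A / c2 \<le> f'' z" using c2 by (simp add: divide_le_eq mult.commute)
    moreover have "f'' z \<le> c2 * f'' (A/2)" using doubling[of "A/2" z] z assms by simp
    ultimately show "f'' A / c2 \<le> f'' z \<and> f'' z \<le> c2 * f'' (A/2)" by simp
  qed (use assms in auto)
  then have "(f'' A / c2)*(A/2) \<le> f' A" using f'pos[of "A/2"] assms by simp
  then have "A * f'' A \<le> 2 * c2 * f' A" using c2 by (simp add: field_simps)
  then have "c2 * (A * f'' A) \<le> c2 * (2 * c2 * f' A)" using c2 by (intro mult_left_mono) auto
  then show ?thesis using up by (simp add: algebra_simps power2_eq_square)
qed

lemma norm_inverse_weighted_sum_le:
  assumes "A \<ge> 2" and phi: "\<forall>m. norm (\<phi> m) \<le> 1"
  shows "norm (\<Sum>m\<in>{m::int. f A < real_of_int m \<and> real_of_int m \<le> f (2*A)}.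
                   \<phi> m * complex_of_real (deriv (inv_into {0<..} f) (real_of_int m))) \<le> A * (1 + 2*c2^2) + 1/F2"
proof -
  have A: "0 < A" "0 < f' A" "F2 \<le> f' A" using assms f'pos f'_mono[of 2 A] unfolding F2_def by auto
  have "norm (\<Sum>m\<in>{m::int. f A < real_of_int m \<and> real_of_int m \<le> f (2*A)}.
                   \<phi> m * complex_of_real (deriv (inv_into {0<..} f) (real_of_int m)))
      \<le> real (card {m::int. f A < real_of_int m \<and> real_of_int m \<le> f (2*A)}) * (1 / f' A)"
  proof (rule norm_sum_le_card_mult)
    fix m assume m: "m \<in> {m::int. f A < real_of_int m \<and> real_of_int m \<le> f (2*A)}"
    obtain x where x: "A < x" "x \<le> 2*A" "deriv (inv_into {0<..} f) (real_of_int m) = 1 / f' x"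
      using deriv_inv_into_eq[of A "2*A" m] m A by auto
    have "f' A \<le> f' x" using f'_mono[of A x] x A by simp
    then have "norm (\<phi> m) * \<bar>1 / f' x\<bar> \<le> 1 * (1 / f' A)" using phi A by (intro mult_mono) (auto simp: frac_le)
    moreover have "norm (\<phi> m * complex_of_real (1 / f' x)) = norm (\<phi> m) * \<bar>1 / f' x\<bar>"
      by (simp only: norm_mult norm_of_real)
    ultimately show "norm (\<phi> m * complex_of_real (deriv (inv_into {0<..} f) (real_of_int m))) \<le> 1 / f' A"
      unfolding x(3) by simp
  qed
  also have "\<dots> \<le> (A * f' (2*A) + 1) * (1 / f' A)"
  proof (rule mult_right_mono)
    have "0*(2*A - A) \<le> f (2*A) - f A \<and> f (2*A) - f A \<le> f' (2*A) * (2*A - A)"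
      by (rule f_diff_bounds) (use A f'pos f'_mono in \<open>auto intro: less_imp_le\<close>)
    then show "real (card {m::int. f A < real_of_int m \<and> real_of_int m \<le> f (2*A)}) \<le> A * f' (2*A) + 1"
      using card_int_points_Ioc_le[of "f A" "f (2*A)"] by (simp add: mult.commute)
  qed (use A in simp)
  also have "\<dots> = A * (f' (2*A) / f' A) + 1 / f' A" using A by (simp add: field_simps)
  also have "\<dots> \<le> A * (1 + 2*c2^2) + 1/F2"
  proof (rule add_mono)
    have "f' (2*A) / f' A \<le> 1 + 2*c2^2" using f'_double_le A by (simp add: divide_le_eq)
    then show "A * (f' (2*A) / f' A) \<le> A * (1 + 2*c2^2)" using A by (intro mult_left_mono) auto
    show "1 / f' A \<le> 1 / F2" using A F2_pos by (intro frac_le) auto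
  qed
  finally show ?thesis .
qed

lemma avg_error_le_B0:
  assumes A2: "A \<ge> 2" and phi: "\<forall>m. norm (\<phi> m) \<le> 1"
  shows "avg_error \<phi> A \<le> B0"
proof -
  have "real (card {n::int. A < real_of_int n \<and> real_of_int n \<le> 2*A}) \<le> 2*A - A + 1"
    by (rule card_int_points_Ioc_le) (use A2 in simp)
  then have "norm (\<Sum>n\<in>{n::int. A < real_of_int n \<and> real_of_int n \<le> 2*A}. \<phi> \<lfloor>f (real_of_int n)\<rfloor>) \<le> 2*A - A + 1"
    using norm_sum_le_card[OF phi, of "\<lambda>n. \<lfloor>f (real_of_int n)\<rfloor>"] by (meson order_trans)
  then have "avg_error \<phi> A \<le> (1/A) * ((A + 1) + (A * (1 + 2*c2^2) + 1/F2))"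
    unfolding avg_error_def using A2 norm_inverse_weighted_sum_le[OF A2 phi]
    by (intro mult_left_mono order_trans[OF norm_triangle_ineq4] add_mono) auto
  also have "\<dots> = 2 + 2*c2^2 + 1/A + 1/(A*F2)" using A2 by (simp add: field_simps)
  also have "\<dots> \<le> B0"
  proof -
    have "1/(A*F2) \<le> 1/(2*F2)" using A2 F2_pos by (intro frac_le mult_right_mono) auto
    moreover have "1/A \<le> 1/2" using A2 by simp
    ultimately show ?thesis unfolding B0_def by linarith
  qed
  finally show ?thesis .
qed

lemma B0_nonneg: "0 \<le> B0" unfolding B0_def using F2_pos by simp

lemma I_avg_nonneg:
  assumes A2: "A \<ge> 2" and K: "K > 0" and phi: "\<forall>m. norm (\<phi> m) \<le> 1"
  shows "0 \<le> I_avg f f' \<phi> A K"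
proof -
  have Ap: "0 < A" using A2 by simp
  have pq: "f A < f (2*A)" using f_strict Ap by simp
  have a0: "0 < f' A" using f'pos Ap by simp
  have a1: "f' A < f' (2*A)" using f'_strict Ap by simp
  have "0 \<le> integral {f' A..f' (2*A)} (sup_disc \<phi> K (f A) (f (2*A)))"
    by (rule integral_nonneg[OF sup_disc_integrable[OF K a0 _ phi pq]]) (use a1 a0 sup_disc_nonneg[OF K _ phi pq] in auto)
  then show ?thesis unfolding I_avg_eq_integral_sup_disc using a1 by simp
qed

end

locale main_regime = convex_doubling +
  fixes A K :: real and \<phi> :: "int \<Rightarrow> complex"
  assumes A2: "A \<ge> 2" and K1: "K \<ge> 1" and phi: "\<forall>m. norm (\<phi> m) \<le> 1"
    and small: "f'' A * K^2 \<le> \<theta>"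
begin

definition "\<epsilon> = f'' A"
definition "a = \<lfloor>A\<rfloor>"
definition "b = \<lfloor>2*A\<rfloor>"
definition "k = \<lfloor>K\<rfloor>"
definition "T = {a+1..b}"
definition "X = \<epsilon> * K^2"
definition "\<delta> = hi * X"

lemma eps_pos: "\<epsilon> > 0" unfolding \<epsilon>_def using f''pos A2 by simp
lemma X_nonneg: "X \<ge> 0" unfolding X_def using eps_pos by simp
lemma X_le1: "X \<le> 1" unfolding X_def \<epsilon>_def using small \<theta>_def by simp
lemma X_le_m0: "X \<le> m0" unfolding X_def \<epsilon>_def using small \<theta>_def by simp
lemma delta_nonneg: "\<delta> \<ge> 0" unfolding \<delta>_def using X_nonneg hi_ge1 by simp
lemma delta_le: "\<delta> \<le> hi" unfolding \<delta>_def using X_le1 hi_ge1 by (simp add: mult_left_le)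
lemma m0_le: "m0 \<le> A * \<epsilon>" unfolding \<epsilon>_def using x_f''_ge_m0 A2 by simp
lemma Apos: "A > 0" using A2 by simp
lemma K_pos: "K > 0" using K1 by simp

lemma eps_le_X: "\<epsilon> \<le> X"
  unfolding X_def using eps_pos K1 by (simp add: mult_le_cancel_left1 one_le_power)

lemma epsK_le_X: "\<epsilon> * K \<le> X"
  unfolding X_def using eps_pos K1 by (simp add: power2_eq_square mult_left_mono)

lemma K2_le_A: "K^2 \<le> A"
proof -
  have "\<epsilon> * K^2 \<le> \<epsilon> * A" using X_le_m0 m0_le unfolding X_def by (simp add: mult.commute)
  then show ?thesis using eps_pos by simp
qed

lemma K_le_A: "K \<le> A"
proof -
  have "K \<le> K^2" using K1 by (simp add: power2_eq_square)
  then show ?thesis using K2_le_A by simp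
qed

lemma one_le_AX_div_m0: "1 \<le> A * X / m0"
proof -
  have "m0 \<le> A * \<epsilon>" by (rule m0_le)
  also have "\<dots> \<le> A * X" using eps_le_X Apos by simp
  finally show ?thesis using m0_pos by simp
qed

lemma K_sq_le_AX_div_m0: "K^2 \<le> A * X / m0"
proof -
  have "m0 * K^2 \<le> A * \<epsilon> * K^2" using m0_le by (simp add: mult_right_mono)
  then show ?thesis unfolding X_def using m0_pos by (simp add: field_simps)
qed

lemma K_le_AX_div_m0: "K \<le> A * X / m0"
proof -
  have "K \<le> K^2" using K1 by (simp add: power2_eq_square)
  then show ?thesis using K_sq_le_AX_div_m0 by simp
qed

lemma a_bounds: "real_of_int a \<le> A" "A < real_of_int a + 1" "2 \<le> a"
  unfolding a_def using A2 by (auto simp: le_floor_iff)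

lemma b_bounds: "real_of_int b \<le> 2*A" "2*A < real_of_int b + 1" "a + 1 \<le> b"
proof -
  show "real_of_int b \<le> 2*A" "2*A < real_of_int b + 1" unfolding b_def by auto
  have "real_of_int \<lfloor>A\<rfloor> + 1 \<le> 2*A" using of_int_floor_le[of A] A2 by linarith
  then show "a + 1 \<le> b" unfolding a_def b_def by (simp add: le_floor_iff)
qed

lemma k_bounds: "real_of_int k \<le> K" "K < real_of_int k + 1" "1 \<le> k" "K \<le> 2 * real_of_int k"
proof -
  show k1: "real_of_int k \<le> K" "K < real_of_int k + 1" "1 \<le> k" unfolding k_def using K1 by (auto simp: le_floor_iff)
  then show "K \<le> 2 * real_of_int k" by linarith
qed

lemma T_range: "t \<in> T \<Longrightarrow> A < real_of_int t \<and> real_of_int t \<le> 2*A"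
  unfolding T_def using a_bounds b_bounds by auto

lemma card_T: "real (card T) \<le> 2*A"
proof -
  have "card T = nat (b - a)" unfolding T_def by simp
  then have "real (card T) = real_of_int b - real_of_int a" using b_bounds by simp
  then show ?thesis using a_bounds b_bounds A2 by linarith
qed

lemma T_eq: "T = {n::int. A < real_of_int n \<and> real_of_int n \<le> 2*A}"
  unfolding T_def a_def b_def by (rule int_points_Ioc_eq[symmetric])

lemma f''_comparable: "A \<le> y \<Longrightarrow> y \<le> 4*A \<Longrightarrow> lo * \<epsilon> \<le> f'' y \<and> f'' y \<le> hi * \<epsilon>"
  unfolding lo_def hi_def \<epsilon>_def using f''_window_bounds[OF Apos] by simp

lemma f'_increment_bounds: assumes "A \<le> x" "x \<le> y" "y \<le> 4*A"
  shows "lo * \<epsilon> * (y - x) \<le> f' y - f' x \<and> f' y - f' x \<le> hi * \<epsilon> * (y - x)"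
  using f'_diff_bounds[of x y "lo*\<epsilon>" "hi*\<epsilon>"] assms f''_comparable Apos by simp

lemma f'_ge_F2: "2 \<le> x \<Longrightarrow> F2 \<le> f' x"
  unfolding F2_def using f'_mono by simp

text \<open>For \<open>t \<in> T\<close> the argument runs through
  \<open>k S1 \<approx> \<Sum>t. P t\<close>, \<open>P t \<approx> Bt t\<close> (Taylor), \<open>Bt t \<approx> Mt t\<close> (up to \<open>K Dt t\<close>), \<open>Mt t \<approx> W t\<close>
  and \<open>\<Sum>t. W t \<approx> k S2\<close>.\<close>

definition "Fn n = \<phi> \<lfloor>f (real_of_int n)\<rfloor>"
definition "P t = (\<Sum>h\<in>{1..k}. Fn (t+h))"
definition "Bt t = (\<Sum>n\<in>{n::int. 0 < n \<and> real_of_int n \<le> K}. \<phi> \<lfloor>real_of_int n * f' (real_of_int t) + f (real_of_int t)\<rfloor>)"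
definition "Mt t = complex_of_real (1 / f' (real_of_int t)) *
   (\<Sum>m\<in>{m::int. f (real_of_int t) < real_of_int m \<and> real_of_int m \<le> f (real_of_int t) + K * f' (real_of_int t)}. \<phi> m)"
definition "G m = \<phi> m * complex_of_real (deriv (inv_into {0<..} f) (real_of_int m))"
definition "W t = (\<Sum>m\<in>{m::int. f (real_of_int t) < real_of_int m \<and> real_of_int m \<le> f (real_of_int t + K)}. G m)"
definition "Nt t = card {d\<in>{1..k}. near_int (real_of_int d * f' (real_of_int t)) \<delta>}"
definition "S1 = (\<Sum>n\<in>T. Fn n)"
definition "Dt t = sup_disc \<phi> K (f A) (f (2*A)) (f' (real_of_int t))"

lemma Fn_bound: "norm (Fn n) \<le> 1" unfolding Fn_def using phi by simp

lemma shift_average_error: "norm (of_int k * S1 - (\<Sum>t\<in>T. P t)) \<le> 2 * (real_of_int k)^2"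
proof -
  have k: "of_nat (card {1..k}) = (of_int k :: complex)" "real (card {1..k}) = real_of_int k"
    using k_bounds by simp_all
  have "norm ((\<Sum>h\<in>{1..k}. \<Sum>t\<in>{a+1..b}. Fn (t + h)) - of_nat (card {1..k}) * (\<Sum>t\<in>{a+1..b}. Fn t))
      \<le> real (card {1..k}) * (2*1*real_of_int k)"
    using Fn_bound by (intro norm_sum_shifts_diff_le) auto
  moreover have "(\<Sum>t\<in>T. P t) = (\<Sum>h\<in>{1..k}. \<Sum>t\<in>T. Fn (t + h))" unfolding P_def by (rule sum.swap)
  ultimately show ?thesis unfolding S1_def T_def k by (simp add: norm_minus_commute power2_eq_square)
qed

lemma taylor_on_T:
  assumes t: "t \<in> T" and h: "0 \<le> h" "h \<le> K"
  shows "0 \<le> f (real_of_int t + h) - f (real_of_int t) - h * f' (real_of_int t) \<and>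
         f (real_of_int t + h) - f (real_of_int t) - h * f' (real_of_int t) \<le> \<delta>"
proof -
  have tr: "A < real_of_int t" "real_of_int t \<le> 2*A" using T_range[OF t] by auto
  have tay: "0 \<le> f (real_of_int t + h) - f (real_of_int t) - (real_of_int t + h - real_of_int t) * f' (real_of_int t) \<and>
         f (real_of_int t + h) - f (real_of_int t) - (real_of_int t + h - real_of_int t) * f' (real_of_int t)
           \<le> (real_of_int t + h - real_of_int t)^2 * (hi*\<epsilon>)"
  proof (rule taylor_bounds)
    show "0 < real_of_int t" using tr Apos by linarith
    show "real_of_int t \<le> real_of_int t + h" using h by simp
    fix z assume "real_of_int t \<le> z" "z \<le> real_of_int t + h"
    then show "f'' z \<le> hi * \<epsilon>" using f''_comparable[of z] tr h K_le_A by auto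
  qed
  have "h^2 * (hi*\<epsilon>) \<le> K^2 * (hi*\<epsilon>)" using h eps_pos hi_ge1
    by (intro mult_right_mono power_mono) auto
  also have "\<dots> = \<delta>" unfolding \<delta>_def X_def by simp
  finally show ?thesis using tay by simp
qed

lemma block_vs_linearization: assumes t: "t \<in> T" shows "norm (P t - Bt t) \<le> 2 * (1 + real (Nt t))"
proof -
  have Bt_eq: "Bt t = (\<Sum>h\<in>{1..k}. \<phi> \<lfloor>real_of_int h * f' (real_of_int t) + f (real_of_int t)\<rfloor>)"
    unfolding Bt_def positive_ints_le_eq k_def ..
  have "norm (P t - Bt t) \<le> 2 * real (card {h\<in>{1..k}. \<lfloor>f (real_of_int (t+h))\<rfloor> \<noteq> \<lfloor>real_of_int h * f' (real_of_int t) + f (real_of_int t)\<rfloor>})"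
    unfolding P_def Fn_def Bt_eq by (rule norm_sum_diff_le_card_neq) (use phi in auto)
  also have "card {h\<in>{1..k}. \<lfloor>f (real_of_int (t+h))\<rfloor> \<noteq> \<lfloor>real_of_int h * f' (real_of_int t) + f (real_of_int t)\<rfloor>} \<le> 1 + Nt t"
    unfolding Nt_def
  proof (rule card_floor_mismatch_le)
    show "{h\<in>{1..k}. \<lfloor>f (real_of_int (t+h))\<rfloor> \<noteq> \<lfloor>real_of_int h * f' (real_of_int t) + f (real_of_int t)\<rfloor>} \<subseteq> {1..k}" by auto
    fix h assume h: "h \<in> {h\<in>{1..k}. \<lfloor>f (real_of_int (t+h))\<rfloor> \<noteq> \<lfloor>real_of_int h * f' (real_of_int t) + f (real_of_int t)\<rfloor>}"
    have hK: "0 \<le> real_of_int h" "real_of_int h \<le> K" using h k_bounds by auto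
    note tay = taylor_on_T[OF t hK]
    show "\<exists>m::int. 0 < real_of_int m - (real_of_int h * f' (real_of_int t) + f (real_of_int t)) \<and>
        real_of_int m - (real_of_int h * f' (real_of_int t) + f (real_of_int t)) \<le> \<delta>"
    proof (rule floor_neq_imp_int_in_gap)
      show "real_of_int h * f' (real_of_int t) + f (real_of_int t) \<le> f (real_of_int (t+h))" using tay by simp
      show "f (real_of_int (t+h)) \<le> real_of_int h * f' (real_of_int t) + f (real_of_int t) + \<delta>" using tay by simp
      show "\<lfloor>real_of_int h * f' (real_of_int t) + f (real_of_int t)\<rfloor> \<noteq> \<lfloor>f (real_of_int (t+h))\<rfloor>" using h by auto
    qed
  qed
  then have "real (card {h\<in>{1..k}. \<lfloor>f (real_of_int (t+h))\<rfloor> \<noteq> \<lfloor>real_of_int h * f' (real_of_int t) + f (real_of_int t)\<rfloor>}) \<le> real (1 + Nt t)"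
    by (simp only: of_nat_le_iff)
  then have "2 * real (card {h\<in>{1..k}. \<lfloor>f (real_of_int (t+h))\<rfloor> \<noteq> \<lfloor>real_of_int h * f' (real_of_int t) + f (real_of_int t)\<rfloor>}) \<le> 2 * (1 + real (Nt t))"
    by simp
  finally show ?thesis .
qed

lemma fA_lt: assumes t: "t \<in> T" shows "f A < f (real_of_int t)" "f (real_of_int t) \<le> f (2*A)"
  using f_strict[of A "real_of_int t"] f_mono[of "real_of_int t" "2*A"] T_range[OF t] Apos by auto

lemma linearization_vs_sup_disc: assumes t: "t \<in> T" shows "norm (Bt t - Mt t) \<le> K * Dt t"
proof -
  have tr: "A < real_of_int t" "real_of_int t \<le> 2*A" using T_range[OF t] by auto
  have ap: "f' (real_of_int t) > 0" using f'pos tr Apos by simp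
  have "short_disc \<phi> K (f' (real_of_int t)) (f (real_of_int t)) = (1/K) * norm (Bt t - Mt t)"
    unfolding short_disc_def Bt_def Mt_def ..
  moreover have "short_disc \<phi> K (f' (real_of_int t)) (f (real_of_int t)) \<le> Dt t"
    unfolding Dt_def by (rule short_disc_le_sup_disc[OF K_pos ap phi fA_lt[OF t]])
  ultimately show ?thesis using K_pos mult_left_mono[of "short_disc \<phi> K (f' (real_of_int t)) (f (real_of_int t))" "Dt t" K]
    by (simp add: field_simps)
qed

lemma G_eq_inverse_slope:
  assumes "0 < u" "u \<le> v" "f u < real_of_int m" "real_of_int m \<le> f v"
  shows "\<exists>x. u < x \<and> x \<le> v \<and> G m = \<phi> m * complex_of_real (1 / f' x)"
  using deriv_inv_into_eq[OF assms] unfolding G_def by auto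

lemma norm_G_le:
  assumes u: "0 < u" "u \<le> v" and m: "f u < real_of_int m" "real_of_int m \<le> f v"
  shows "norm (G m) \<le> 1 / f' u"
proof -
  obtain x where x: "u < x" "x \<le> v" "G m = \<phi> m * complex_of_real (1 / f' x)" using G_eq_inverse_slope[OF u m] by blast
  have fx: "f' u \<le> f' x" "0 < f' u" using f'_mono[of u x] f'pos[of u] x u by auto
  have e: "norm (G m) = norm (\<phi> m) * \<bar>1 / f' x\<bar>" unfolding x(3) by (simp only: norm_mult norm_of_real)
  have e2: "\<bar>1 / f' x\<bar> = 1 / f' x" using fx by simp
  have "norm (\<phi> m) * (1 / f' x) \<le> 1 * (1 / f' u)" using phi fx by (intro mult_mono frac_le) auto
  then show ?thesis using e e2 by simp
qed

lemma norm_linearized_weight_diff_le: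
  assumes t: "t \<in> T" and m: "f (real_of_int t) < real_of_int m" "real_of_int m \<le> f (real_of_int t + K)"
  shows "norm (\<phi> m * complex_of_real (1 / f' (real_of_int t)) - G m) \<le> hi*\<epsilon>*K / (f' (real_of_int t))^2"
proof -
  define \<tau> where "\<tau> = real_of_int t"
  define \<alpha> where "\<alpha> = f' \<tau>"
  have tr: "A < \<tau>" "\<tau> \<le> 2*A" using T_range[OF t] unfolding \<tau>_def by auto
  have apos: "0 < \<alpha>" unfolding \<alpha>_def using f'pos tr Apos by simp
  obtain x where x: "\<tau> < x" "x \<le> \<tau> + K" "G m = \<phi> m * complex_of_real (1 / f' x)"
    using G_eq_inverse_slope[of \<tau> "\<tau> + K" m] m tr Apos K_pos unfolding \<tau>_def by auto
  have st: "lo * \<epsilon> * (x - \<tau>) \<le> f' x - f' \<tau> \<and> f' x - f' \<tau> \<le> hi * \<epsilon> * (x - \<tau>)"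
    using f'_increment_bounds[of \<tau> x] tr x K_le_A by auto
  have fx: "\<alpha> \<le> f' x" using st lo_pos eps_pos x unfolding \<alpha>_def by (smt (verit) mult_nonneg_nonneg)
  have "hi * \<epsilon> * (x - \<tau>) \<le> hi * \<epsilon> * K" using x hi_ge1 eps_pos by (intro mult_left_mono) auto
  then have d: "f' x - \<alpha> \<le> hi*\<epsilon>*K" using st unfolding \<alpha>_def by linarith
  have "\<phi> m * complex_of_real (1/\<alpha>) - G m = \<phi> m * complex_of_real (1/\<alpha> - 1/f' x)"
    unfolding x(3) by (simp only: of_real_diff right_diff_distrib)
  then have "norm (\<phi> m * complex_of_real (1/\<alpha>) - G m) = norm (\<phi> m) * \<bar>1/\<alpha> - 1/f' x\<bar>"
    by (simp only: norm_mult norm_of_real)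
  also have "\<dots> \<le> 1 * ((f' x - \<alpha>)/(\<alpha> * \<alpha>))"
  proof (rule mult_mono)
    have "\<bar>1/\<alpha> - 1/f' x\<bar> = (f' x - \<alpha>)/(\<alpha> * f' x)" using fx apos by (simp add: field_simps)
    also have "\<dots> \<le> (f' x - \<alpha>)/(\<alpha> * \<alpha>)" using fx apos by (intro divide_left_mono mult_left_mono) auto
    finally show "\<bar>1/\<alpha> - 1/f' x\<bar> \<le> (f' x - \<alpha>)/(\<alpha> * \<alpha>)" .
  qed (use phi in auto)
  also have "\<dots> \<le> hi*\<epsilon>*K/\<alpha>^2" using d apos by (simp add: power2_eq_square divide_right_mono)
  finally show ?thesis unfolding \<alpha>_def \<tau>_def .
qed

lemma linearization_error_le:
  assumes "F2 \<le> \<alpha>"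
  shows "(K*\<alpha> + 1) * (hi*\<epsilon>*K/\<alpha>^2) \<le> hi*X/F2 + hi*X/F2^2"
proof -
  have "(K*\<alpha> + 1) * (hi*\<epsilon>*K/\<alpha>^2) = hi*(\<epsilon>*K^2)/\<alpha> + hi*(\<epsilon>*K)/\<alpha>^2"
    using assms F2_pos by (simp add: field_simps power2_eq_square)
  also have "\<dots> \<le> hi*X/F2 + hi*X/F2^2"
  proof (rule add_mono)
    show "hi*(\<epsilon>*K^2)/\<alpha> \<le> hi*X/F2" unfolding X_def using assms F2_pos hi_ge1 eps_pos
      by (intro frac_le mult_left_mono) auto
    have "hi*(\<epsilon>*K) \<le> hi*X" using epsK_le_X hi_ge1 by simp
    moreover have "F2^2 \<le> \<alpha>^2" using assms F2_pos by (intro power_mono) auto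
    ultimately show "hi*(\<epsilon>*K)/\<alpha>^2 \<le> hi*X/F2^2" using F2_pos hi_ge1 X_nonneg eps_pos K_pos
      by (intro frac_le) auto
  qed
  finally show ?thesis .
qed

lemma linearized_vs_inverse_weights: assumes t: "t \<in> T"
  shows "norm (Mt t - W t) \<le> hi*X/F2 + hi*X/F2^2 + (hi*X+1)/F2"
proof -
  define \<tau> where "\<tau> = real_of_int t"
  define \<alpha> where "\<alpha> = f' \<tau>"
  have tr: "A < \<tau>" "\<tau> \<le> 2*A" using T_range[OF t] unfolding \<tau>_def by auto
  have aF: "F2 \<le> \<alpha>" unfolding \<alpha>_def using f'_ge_F2 tr A2 by simp
  have apos: "0 < \<alpha>" using aF F2_pos by simp
  have tay: "0 \<le> f (\<tau> + K) - f \<tau> - K * \<alpha> \<and> f (\<tau> + K) - f \<tau> - K * \<alpha> \<le> \<delta>"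
    using taylor_on_T[OF t, of K] K_pos unfolding \<tau>_def \<alpha>_def by simp
  define I0 where "I0 = {m::int. f \<tau> < real_of_int m \<and> real_of_int m \<le> f \<tau> + K * \<alpha>}"
  define J where "J = {m::int. f \<tau> + K * \<alpha> < real_of_int m \<and> real_of_int m \<le> f (\<tau> + K)}"
  have "W t = (\<Sum>m\<in>I0. G m) + (\<Sum>m\<in>J. G m)"
    unfolding W_def I0_def J_def \<tau>_def[symmetric]
    by (rule sum_int_points_Ioc_split) (use tay K_pos apos in auto)
  moreover have "Mt t = (\<Sum>m\<in>I0. \<phi> m * complex_of_real (1/\<alpha>))"
    unfolding Mt_def I0_def \<alpha>_def \<tau>_def by (simp add: sum_distrib_left mult.commute)
  ultimately have "Mt t - W t = (\<Sum>m\<in>I0. \<phi> m * complex_of_real (1/\<alpha>) - G m) - (\<Sum>m\<in>J. G m)"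
    by (simp add: sum_subtractf)
  then have "norm (Mt t - W t) \<le> norm (\<Sum>m\<in>I0. \<phi> m * complex_of_real (1/\<alpha>) - G m) + norm (\<Sum>m\<in>J. G m)"
    by (simp add: norm_triangle_ineq4)
  also have "norm (\<Sum>m\<in>I0. \<phi> m * complex_of_real (1/\<alpha>) - G m) \<le> real (card I0) * (hi*\<epsilon>*K/\<alpha>^2)"
    using norm_linearized_weight_diff_le[OF t] tay unfolding I0_def \<alpha>_def \<tau>_def
    by (intro norm_sum_le_card_mult) auto
  also have "\<dots> \<le> (K*\<alpha> + 1) * (hi*\<epsilon>*K/\<alpha>^2)"
    using card_int_points_Ioc_le[of "f \<tau>" "f \<tau> + K*\<alpha>"] K_pos apos hi_ge1 eps_pos
    unfolding I0_def by (intro mult_right_mono) auto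
  also have "norm (\<Sum>m\<in>J. G m) \<le> real (card J) * (1/\<alpha>)"
  proof (rule norm_sum_le_card_mult)
    fix m assume m: "m \<in> J"
    have "f \<tau> < real_of_int m" "real_of_int m \<le> f (\<tau> + K)"
      using m tay K_pos apos unfolding J_def by (auto intro: order.strict_trans1[rotated])
    then show "norm (G m) \<le> 1/\<alpha>" unfolding \<alpha>_def using norm_G_le[of \<tau> "\<tau> + K"] tr Apos K_pos by simp
  qed
  also have "real (card J) * (1/\<alpha>) \<le> (\<delta> + 1) * (1/F2)"
    using card_int_points_Ioc_le[of "f \<tau> + K*\<alpha>" "f (\<tau> + K)"] tay aF F2_pos delta_nonneg
    unfolding J_def by (intro mult_mono frac_le) auto
  finally show ?thesis using linearization_error_le[OF aF] unfolding \<delta>_def by simp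
qed

definition "S2 = (\<Sum>m\<in>{m::int. f A < real_of_int m \<and> real_of_int m \<le> f (2*A)}. G m)"
definition "V s = (\<Sum>m\<in>{m::int. f (real_of_int s) < real_of_int m \<and> real_of_int m \<le> f (real_of_int (s+1))}. G m)"
definition "R t = (\<Sum>m\<in>{m::int. f (real_of_int (t+k)) < real_of_int m \<and> real_of_int m \<le> f (real_of_int t + K)}. G m)"

lemma norm_sum_G_unit_step_le:
  assumes uv: "A \<le> u" "u \<le> v" "v \<le> u + 1" "v \<le> 4*A"
  shows "norm (\<Sum>m\<in>{m::int. f u < real_of_int m \<and> real_of_int m \<le> f v}. G m) \<le> BV"
proof -
  have upos: "0 < u" using uv Apos by simp
  have fu: "F2 \<le> f' u" using f'_ge_F2 uv A2 by simp
  have fupos: "0 < f' u" using fu F2_pos by simp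
  have "norm (\<Sum>m\<in>{m::int. f u < real_of_int m \<and> real_of_int m \<le> f v}. G m) \<le>
        real (card {m::int. f u < real_of_int m \<and> real_of_int m \<le> f v}) * (1 / f' u)"
  proof (rule norm_sum_le_card_mult)
    fix m assume "m \<in> {m::int. f u < real_of_int m \<and> real_of_int m \<le> f v}"
    then show "norm (G m) \<le> 1 / f' u" using norm_G_le[OF upos uv(2)] by auto
  qed
  also have "\<dots> \<le> (f' u + hi + 1) * (1 / f' u)"
  proof (rule mult_right_mono)
    have "0*(v-u) \<le> f v - f u \<and> f v - f u \<le> f' v * (v-u)"
    proof (rule f_diff_bounds[OF upos uv(2)])
      fix z assume z: "u \<le> z" "z \<le> v"
      then have "0 < z" using upos by simp
      then show "0 \<le> f' z \<and> f' z \<le> f' v" using f'pos[of z] f'_mono[of z v] z by simp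
    qed
    then have fv: "f v - f u \<le> f' v * (v - u)" by simp
    have fv2: "f' v - f' u \<le> hi * \<epsilon> * (v - u)" using f'_increment_bounds[of u v] uv by simp
    have "hi * \<epsilon> * (v - u) \<le> hi * 1 * 1"
      using eps_le_X X_le1 hi_ge1 eps_pos uv by (intro mult_mono) auto
    then have fv3: "f' v \<le> f' u + hi" using fv2 by simp
    have "f' v * (v - u) \<le> f' v * 1" using uv f'pos[of v] upos by (intro mult_left_mono) auto
    then have "f v - f u \<le> f' u + hi" using fv fv3 by linarith
    moreover have "f u \<le> f v" using f_mono[OF upos uv(2)] .
    ultimately show "real (card {m::int. f u < real_of_int m \<and> real_of_int m \<le> f v}) \<le> f' u + hi + 1"
      using card_int_points_Ioc_le[of "f u" "f v"] by linarith
  qed (use fupos in simp)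
  also have "(f' u + hi + 1) * (1 / f' u) = 1 + (hi + 1) / f' u" using fupos by (simp add: field_simps)
  also have "\<dots> \<le> BV" unfolding BV_def using fu F2_pos hi_ge1 by (simp add: frac_le)
  finally show ?thesis .
qed

lemma W_decomp: assumes t: "t \<in> T"
  shows "W t = (\<Sum>j\<in>{0..<k}. V (t+j)) + R t"
proof -
  define \<tau> where "\<tau> = real_of_int t"
  have tr: "A < \<tau>" "\<tau> \<le> 2*A" using T_range[OF t] unfolding \<tau>_def by auto
  have tpos: "0 < \<tau>" using tr Apos by linarith
  have k0: "0 \<le> k" using k_bounds by simp
  have fm1: "f \<tau> \<le> f (real_of_int (t+k))" using f_mono[of \<tau> "real_of_int (t+k)"] tpos k0 unfolding \<tau>_def by simp
  have fm2: "f (real_of_int (t+k)) \<le> f (\<tau> + K)" using f_mono[of "real_of_int (t+k)" "\<tau> + K"] tpos k0 k_bounds unfolding \<tau>_def by simp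
  have "W t = (\<Sum>m\<in>{m::int. f \<tau> < real_of_int m \<and> real_of_int m \<le> f (real_of_int (t+k))}. G m) + R t"
    unfolding W_def R_def \<tau>_def[symmetric] by (rule sum_int_points_Ioc_split[OF fm1 fm2])
  also have "(\<Sum>m\<in>{m::int. f \<tau> < real_of_int m \<and> real_of_int m \<le> f (real_of_int (t+k))}. G m) = (\<Sum>s\<in>{t..<t+k}. V s)"
    unfolding V_def \<tau>_def
    by (rule sum_int_points_Ioc_blocks[symmetric, where v="\<lambda>s. f (real_of_int s)"]) (use tpos k0 f_mono in \<open>auto simp: \<tau>_def\<close>)
  also have "(\<Sum>s\<in>{t..<t+k}. V s) = (\<Sum>j\<in>{0..<k}. V (t+j))"
    by (rule sum.reindex_bij_witness[of _ "\<lambda>j. t + j" "\<lambda>s. s - t"]) auto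
  finally show ?thesis .
qed

lemma norm_sum_V_minus_S2_le: "norm ((\<Sum>t\<in>T. V t) - S2) \<le> 2*BV"
proof -
  have Tlt: "T = {a+1..<b+1}" unfolding T_def by auto
  have apos: "0 < real_of_int (a+1)" using a_bounds by simp
  have Vsum: "(\<Sum>t\<in>T. V t) = (\<Sum>m\<in>{m::int. f (real_of_int (a+1)) < real_of_int m \<and> real_of_int m \<le> f (real_of_int (b+1))}. G m)"
    unfolding Tlt V_def
    by (rule sum_int_points_Ioc_blocks[where v="\<lambda>s. f (real_of_int s)"]) (use apos b_bounds f_mono in auto)
  have y12: "f A \<le> f (real_of_int (a+1))" using f_mono[of A "real_of_int (a+1)"] a_bounds Apos by simp
  have y23: "f (real_of_int (a+1)) \<le> f (2*A)" using f_mono[of "real_of_int (a+1)" "2*A"] b_bounds apos by simp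
  have y34: "f (2*A) \<le> f (real_of_int (b+1))" using f_mono[of "2*A" "real_of_int (b+1)"] b_bounds Apos by simp
  define s12 where "s12 = (\<Sum>m\<in>{m::int. f A < real_of_int m \<and> real_of_int m \<le> f (real_of_int (a+1))}. G m)"
  define s34 where "s34 = (\<Sum>m\<in>{m::int. f (2*A) < real_of_int m \<and> real_of_int m \<le> f (real_of_int (b+1))}. G m)"
  define s14 where "s14 = (\<Sum>m\<in>{m::int. f A < real_of_int m \<and> real_of_int m \<le> f (real_of_int (b+1))}. G m)"
  have "s14 = s12 + (\<Sum>t\<in>T. V t)" unfolding s14_def s12_def Vsum
    by (rule sum_int_points_Ioc_split) (use y12 y23 y34 in auto)
  moreover have "s14 = S2 + s34" unfolding s14_def S2_def s34_def
    by (rule sum_int_points_Ioc_split) (use y12 y23 y34 in auto)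
  ultimately have "(\<Sum>t\<in>T. V t) - S2 = s34 - s12" by (simp add: algebra_simps)
  moreover have "norm s12 \<le> BV" unfolding s12_def by (rule norm_sum_G_unit_step_le) (use a_bounds in auto)
  moreover have "norm s34 \<le> BV" unfolding s34_def by (rule norm_sum_G_unit_step_le) (use b_bounds A2 in auto)
  ultimately show ?thesis using norm_triangle_ineq4[of s34 s12] by simp
qed

lemma inverse_weights_average_error:
  "norm ((\<Sum>t\<in>T. W t) - of_int k * S2) \<le> real (card T) * BV + 2*BV*(real_of_int k)^2 + 2*BV*real_of_int k"
proof -
  have k: "of_nat (card {0..<k}) = (of_int k :: complex)" "real (card {0..<k}) = real_of_int k" "0 \<le> k"
    using k_bounds by simp_all
  have "(\<Sum>t\<in>T. W t) = (\<Sum>t\<in>T. (\<Sum>j\<in>{0..<k}. V (t+j)) + R t)"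
    by (rule sum.cong[OF refl]) (rule W_decomp)
  also have "\<dots> = (\<Sum>j\<in>{0..<k}. \<Sum>t\<in>T. V (t+j)) + (\<Sum>t\<in>T. R t)" by (simp add: sum.distrib sum.swap[of _ T])
  finally have "(\<Sum>t\<in>T. W t) - of_int k * S2 = ((\<Sum>j\<in>{0..<k}. \<Sum>t\<in>T. V (t+j)) - of_int k * (\<Sum>t\<in>T. V t))
        + of_int k * ((\<Sum>t\<in>T. V t) - S2) + (\<Sum>t\<in>T. R t)"
    by (simp add: algebra_simps)
  also have "norm \<dots> \<le> norm ((\<Sum>j\<in>{0..<k}. \<Sum>t\<in>T. V (t+j)) - of_int k * (\<Sum>t\<in>T. V t))
        + norm (of_int k * ((\<Sum>t\<in>T. V t) - S2)) + norm (\<Sum>t\<in>T. R t)"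
    by (rule order_trans[OF norm_triangle_ineq add_right_mono[OF norm_triangle_ineq]])
  also have "norm ((\<Sum>j\<in>{0..<k}. \<Sum>t\<in>T. V (t+j)) - of_int k * (\<Sum>t\<in>T. V t)) \<le> real_of_int k * (2*BV*real_of_int k)"
  proof -
    have "real_of_int n + 1 \<le> 4*A" if "n \<le> b + k" for n
      using that b_bounds k_bounds K_le_A A2 by linarith
    then have "norm ((\<Sum>j\<in>{0..<k}. \<Sum>t\<in>{a+1..b}. V (t + j)) - of_nat (card {0..<k}) * (\<Sum>t\<in>{a+1..b}. V t))
        \<le> real (card {0..<k}) * (2*BV*real_of_int k)"
      unfolding V_def using a_bounds BV_nonneg
      by (intro norm_sum_shifts_diff_le norm_sum_G_unit_step_le) auto
    then show ?thesis unfolding T_def k by simp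
  qed
  also have "norm (of_int k * ((\<Sum>t\<in>T. V t) - S2)) \<le> real_of_int k * (2*BV)"
    using norm_sum_V_minus_S2_le k by (simp add: norm_mult mult_left_mono)
  also have "norm (\<Sum>t\<in>T. R t) \<le> real (card T) * BV"
  proof (rule norm_sum_le_card_mult)
    fix t assume t: "t \<in> T"
    show "norm (R t) \<le> BV" unfolding R_def
      by (rule norm_sum_G_unit_step_le) (use T_range[OF t] k_bounds K_le_A in auto)
  qed
  finally show ?thesis by (simp add: algebra_simps power2_eq_square)
qed

definition "Q = 2*\<delta>*hi*A/lo + real_of_int k*hi*\<epsilon>*A + (2*\<delta>+1)*2*\<delta>/(lo*\<epsilon>) + 2*\<delta> + 1"

lemma card_near_multiple_le_aux:
  assumes d: "d \<in> {1..k}"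
  shows "real (card {t\<in>T. near_int (real_of_int d * f' (real_of_int t)) \<delta>})
           \<le> (real_of_int d * (hi*\<epsilon>*A) + 2*\<delta> + 1) * (2*\<delta>/(real_of_int d * (lo * \<epsilon>)) + 1)"
proof -
  define u where "u t = real_of_int d * f' (real_of_int t)" for t
  define \<gamma> where "\<gamma> = real_of_int d * (lo * \<epsilon>)"
  have dpos: "1 \<le> real_of_int d" using d by auto
  have gpos: "\<gamma> > 0" unfolding \<gamma>_def using dpos lo_pos eps_pos by simp
  have gap: "u t + \<gamma> \<le> u (t+1)" if "a+1 \<le> t" "t < b" for t
  proof -
    have tr: "A \<le> real_of_int t" "real_of_int t + 1 \<le> 4*A" using that a_bounds b_bounds A2 by linarith+
    have "lo * \<epsilon> * 1 \<le> f' (real_of_int t + 1) - f' (real_of_int t)"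
      using f'_increment_bounds[of "real_of_int t" "real_of_int t + 1"] tr by simp
    then have "real_of_int d * (lo * \<epsilon>) \<le> real_of_int d * (f' (real_of_int t + 1) - f' (real_of_int t))"
      using dpos by (intro mult_left_mono) auto
    then show ?thesis unfolding u_def \<gamma>_def by (simp add: algebra_simps)
  qed
  have "real (card {t\<in>{a+1..b}. near_int (u t) \<delta>}) \<le> (u b - u (a+1) + 2*\<delta> + 1) * (2*\<delta>/\<gamma> + 1)"
    by (rule card_near_int_le[where u=u and a="a+1" and b=b, OF gap gpos delta_nonneg]) (use b_bounds in auto)
  also have "\<dots> \<le> (real_of_int d * (hi*\<epsilon>*A) + 2*\<delta> + 1) * (2*\<delta>/\<gamma> + 1)"
  proof (rule mult_right_mono)
    have "f' (real_of_int b) \<le> f' (2*A)" using f'_mono[of "real_of_int b" "2*A"] b_bounds a_bounds by simp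
    moreover have "f' A \<le> f' (real_of_int (a+1))" using f'_mono[of A "real_of_int (a+1)"] a_bounds Apos by simp
    moreover have "f' (2*A) - f' A \<le> hi*\<epsilon>*(2*A - A)" using f'_increment_bounds[of A "2*A"] Apos by simp
    ultimately have "f' (real_of_int b) - f' (real_of_int (a+1)) \<le> hi*\<epsilon>*A" by simp
    then have "real_of_int d * (f' (real_of_int b) - f' (real_of_int (a+1))) \<le> real_of_int d * (hi*\<epsilon>*A)"
      using dpos by (intro mult_left_mono) auto
    then show "u b - u (a+1) + 2*\<delta> + 1 \<le> real_of_int d * (hi*\<epsilon>*A) + 2*\<delta> + 1"
      unfolding u_def by (simp add: algebra_simps)
    show "0 \<le> 2*\<delta>/\<gamma> + 1" using delta_nonneg gpos by simp
  qed
  finally show ?thesis unfolding T_def u_def \<gamma>_def .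
qed

lemma card_near_multiple_le:
  assumes d: "d \<in> {1..k}"
  shows "real (card {t\<in>T. near_int (real_of_int d * f' (real_of_int t)) \<delta>}) \<le> Q"
proof -
  have dpos: "1 \<le> real_of_int d" "real_of_int d \<le> real_of_int k" using d by auto
  have "(real_of_int d * (hi*\<epsilon>*A) + 2*\<delta> + 1) * (2*\<delta>/(real_of_int d * (lo * \<epsilon>)) + 1)
      = 2*\<delta>*hi*A/lo + real_of_int d*hi*\<epsilon>*A + (2*\<delta>+1)*2*\<delta>/(real_of_int d*(lo*\<epsilon>)) + 2*\<delta> + 1"
    using dpos lo_pos eps_pos by (simp add: field_simps)
  also have "\<dots> \<le> Q" unfolding Q_def
  proof -
    have "real_of_int d*hi*\<epsilon>*A \<le> real_of_int k*hi*\<epsilon>*A"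
      using dpos hi_ge1 eps_pos Apos by (intro mult_right_mono) auto
    moreover have "(2*\<delta>+1)*2*\<delta>/(real_of_int d*(lo*\<epsilon>)) \<le> (2*\<delta>+1)*2*\<delta>/(lo*\<epsilon>)"
      using dpos lo_pos eps_pos delta_nonneg mult_right_mono[of 1 "real_of_int d" "lo*\<epsilon>"]
      by (intro divide_left_mono) auto
    ultimately show "2*\<delta>*hi*A/lo + real_of_int d*hi*\<epsilon>*A + (2*\<delta>+1)*2*\<delta>/(real_of_int d*(lo*\<epsilon>)) + 2*\<delta> + 1
        \<le> 2*\<delta>*hi*A/lo + real_of_int k*hi*\<epsilon>*A + (2*\<delta>+1)*2*\<delta>/(lo*\<epsilon>) + 2*\<delta> + 1" by linarith
  qed
  finally show ?thesis using card_near_multiple_le_aux[OF d] by linarith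
qed

lemma sum_near_count_le: "real (\<Sum>t\<in>T. Nt t) \<le> real_of_int k * Q"
proof -
  have "(\<Sum>t\<in>T. Nt t) = (\<Sum>t\<in>T. \<Sum>d\<in>{1..k}. if near_int (real_of_int d * f' (real_of_int t)) \<delta> then 1 else 0)"
    unfolding Nt_def by (rule sum.cong[OF refl]) (rule card_filter_sum, simp)
  also have "\<dots> = (\<Sum>d\<in>{1..k}. \<Sum>t\<in>T. if near_int (real_of_int d * f' (real_of_int t)) \<delta> then 1 else 0)"
    by (rule sum.swap)
  also have "\<dots> = (\<Sum>d\<in>{1..k}. card {t\<in>T. near_int (real_of_int d * f' (real_of_int t)) \<delta>})"
    by (rule sum.cong[OF refl]) (rule card_filter_sum[symmetric], simp add: T_def)
  finally have "real (\<Sum>t\<in>T. Nt t) = (\<Sum>d\<in>{1..k}. real (card {t\<in>T. near_int (real_of_int d * f' (real_of_int t)) \<delta>}))"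
    by simp
  also have "\<dots> \<le> (\<Sum>d\<in>{1..k}. Q)" by (rule sum_mono) (rule card_near_multiple_le)
  also have "\<dots> = real_of_int k * Q" using k_bounds by simp
  finally show ?thesis .
qed

definition "Dfn = sup_disc \<phi> K (f A) (f (2*A))"
definition "Dint = integral {f' A..f' (2*A)} Dfn"
definition "E6 = 2*hi*\<epsilon>/F2 + hi*\<epsilon>/F2^2 + 1/(K*F2)"
definition "et t = (2/K)*(1 + real (Nt t)) + E6"

lemma pq: "f A < f (2*A)" using f_strict Apos by simp
lemma f'A_pos: "0 < f' A" using f'pos Apos by simp
lemma f'A_le: "f' A \<le> f' (2*A)" using f'_mono Apos by simp
lemma Dfn_int: "Dfn integrable_on {f' A..f' (2*A)}"
  unfolding Dfn_def by (rule sup_disc_integrable[OF K_pos f'A_pos f'A_le phi pq])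
lemma Dfn_nonneg: "0 < \<alpha> \<Longrightarrow> 0 \<le> Dfn \<alpha>"
  unfolding Dfn_def by (rule sup_disc_nonneg[OF K_pos _ phi pq])
lemma Dint_nonneg: "0 \<le> Dint"
  unfolding Dint_def by (rule integral_nonneg[OF Dfn_int]) (use Dfn_nonneg f'A_pos in auto)
lemma E6_nonneg: "0 \<le> E6" unfolding E6_def using hi_ge1 eps_pos F2_pos K_pos by simp
lemma et_nonneg: "0 \<le> et t" unfolding et_def using E6_nonneg K_pos by simp

lemma sup_disc_le_perturbed:
  assumes t: "a+1 \<le> t" "t < b" and \<alpha>: "f' (real_of_int t) \<le> \<alpha>" "\<alpha> \<le> f' (real_of_int t + 1)"
  shows "Dt t \<le> Dfn \<alpha> + et t"
proof -
  define \<alpha>0 where "\<alpha>0 = f' (real_of_int t)"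
  define \<eta> where "\<eta> = f' (real_of_int t + 1) - \<alpha>0"
  have tr: "A \<le> real_of_int t" "real_of_int t + 1 \<le> 2*A" using t a_bounds b_bounds by linarith+
  have \<eta>: "\<eta> \<le> hi * \<epsilon>" unfolding \<eta>_def \<alpha>0_def using f'_increment_bounds[of "real_of_int t" "real_of_int t + 1"] tr Apos by simp
  have aF: "F2 \<le> \<alpha>0" unfolding \<alpha>0_def using f'_ge_F2 tr A2 by simp
  have a0: "0 < \<alpha>0" using aF F2_pos by simp
  have "K*\<eta> \<le> K*(hi*\<epsilon>)" using \<eta> K_pos by (intro mult_left_mono) auto
  also have "\<dots> \<le> K^2*(hi*\<epsilon>)" using K1 hi_ge1 eps_pos by (intro mult_right_mono) (auto simp: power2_eq_square)
  also have "\<dots> = \<delta>" unfolding \<delta>_def X_def by simp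
  finally have "{d\<in>{1..\<lfloor>K\<rfloor>}. near_int (real_of_int d*\<alpha>0) (K*\<eta>)} \<subseteq> {d\<in>{1..k}. near_int (real_of_int d * \<alpha>0) \<delta>}"
    unfolding k_def using near_int_mono by blast
  then have "card {d\<in>{1..\<lfloor>K\<rfloor>}. near_int (real_of_int d*\<alpha>0) (K*\<eta>)} \<le> Nt t"
    unfolding Nt_def \<alpha>0_def by (rule card_mono[rotated]) (rule finite_subset[of _ "{1..k}"], auto)
  then have "(2/K)*(1 + real(card {d\<in>{1..\<lfloor>K\<rfloor>}. near_int (real_of_int d*\<alpha>0) (K*\<eta>)})) \<le> (2/K)*(1 + real (Nt t))"
    using K_pos by (intro mult_left_mono) auto
  moreover have "2*\<eta>/\<alpha>0 \<le> 2*hi*\<epsilon>/F2" "\<eta>/\<alpha>0^2 \<le> hi*\<epsilon>/F2^2" "1/(K*\<alpha>0) \<le> 1/(K*F2)"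
    using \<eta> \<alpha> aF F2_pos K_pos unfolding \<eta>_def \<alpha>0_def by (auto intro!: frac_le power_mono mult_left_mono)
  moreover have "sup_disc \<phi> K (f A) (f (2*A)) \<alpha>0 \<le> sup_disc \<phi> K (f A) (f (2*A)) \<alpha>
      + (2/K)*(1 + real(card {d\<in>{1..\<lfloor>K\<rfloor>}. near_int (real_of_int d*\<alpha>0) (K*\<eta>)})) + 2*\<eta>/\<alpha>0 + \<eta>/\<alpha>0^2 + 1/(K*\<alpha>0)"
    by (rule sup_disc_perturb[OF K1 a0 _ _ phi pq]) (use \<alpha> in \<open>simp_all add: \<eta>_def \<alpha>0_def\<close>)
  ultimately show ?thesis unfolding Dt_def Dfn_def et_def E6_def \<alpha>0_def by linarith
qed

lemma sup_disc_le_cell_integral: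
  assumes t: "a+1 \<le> t" "t < b"
  shows "Dt t \<le> et t + integral {f' (real_of_int t)..f' (real_of_int t + 1)} Dfn / (lo*\<epsilon>)"
proof -
  have tr: "A \<le> real_of_int t" "real_of_int t + 1 \<le> 2*A" using t a_bounds b_bounds by linarith+
  have sub: "{f' (real_of_int t)..f' (real_of_int t + 1)} \<subseteq> {f' A..f' (2*A)}"
    using f'_mono[of A "real_of_int t"] f'_mono[of "real_of_int t + 1" "2*A"] tr Apos by auto
  have "Dt t - et t \<le> integral {f' (real_of_int t)..f' (real_of_int t + 1)} Dfn / (lo*\<epsilon>)"
  proof (rule le_integral_div_length)
    show "Dfn integrable_on {f' (real_of_int t)..f' (real_of_int t + 1)}"
      by (rule integrable_subinterval_real[OF Dfn_int sub])
    show "0 \<le> Dfn x" if "x \<in> {f' (real_of_int t)..f' (real_of_int t + 1)}" for x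
      using Dfn_nonneg f'pos[of "real_of_int t"] that tr Apos by auto
    show "Dt t - et t \<le> Dfn x" if "x \<in> {f' (real_of_int t)..f' (real_of_int t + 1)}" for x
      using sup_disc_le_perturbed[OF t, of x] that by simp
    show "0 < lo*\<epsilon>" using lo_pos eps_pos by simp
    show "lo*\<epsilon> \<le> f' (real_of_int t + 1) - f' (real_of_int t)"
      using f'_increment_bounds[of "real_of_int t" "real_of_int t + 1"] tr Apos by simp
  qed
  then show ?thesis by simp
qed

lemma sum_cell_integrals_le:
  "(\<Sum>t\<in>{a+1..<b}. integral {f' (real_of_int t)..f' (real_of_int t + 1)} Dfn) \<le> Dint"
proof -
  have sub: "{f' (real_of_int (a+1))..f' (real_of_int b)} \<subseteq> {f' A..f' (2*A)}"
    using f'_mono[of A "real_of_int (a+1)"] f'_mono[of "real_of_int b" "2*A"] a_bounds b_bounds Apos by auto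
  have "(\<Sum>t\<in>{a+1..<b}. integral {f' (real_of_int t)..f' (real_of_int (t + 1))} Dfn)
      = integral {f' (real_of_int (a+1))..f' (real_of_int b)} Dfn"
  proof (rule integral_sum_blocks[where u="\<lambda>s. f' (real_of_int s)" and q0=b])
    show "f' (real_of_int s) \<le> f' (real_of_int t)" if "a+1 \<le> s" "s \<le> t" for s t
      using f'_mono that a_bounds by simp
  qed (use b_bounds integrable_subinterval_real[OF Dfn_int sub] in auto)
  also have "\<dots> \<le> Dint"
    unfolding Dint_def using Dfn_int integrable_subinterval_real[OF Dfn_int sub] Dfn_nonneg f'A_pos sub
    by (intro integral_subset_le) auto
  finally show ?thesis by simp
qed

lemma Dt_le: assumes "2 \<le> real_of_int t" shows "Dt t \<le> 2 + 1/F2"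
proof -
  have pos: "0 < f' (real_of_int t)" and F2t: "F2 \<le> f' (real_of_int t)"
    using f'pos f'_ge_F2 assms by auto
  have "1 * f' (real_of_int t) \<le> K * f' (real_of_int t)" using K1 pos by (intro mult_right_mono) auto
  then have "F2 \<le> K * f' (real_of_int t)" using F2t by simp
  then have "1/(K * f' (real_of_int t)) \<le> 1/F2" using F2_pos by (intro divide_left_mono) auto
  moreover have "Dt t \<le> 2 + 1/(K * f' (real_of_int t))" unfolding Dt_def by (rule sup_disc_le[OF K_pos pos phi pq])
  ultimately show ?thesis by simp
qed

lemma sum_sup_disc_le:
  "(\<Sum>t\<in>T. Dt t) \<le> (2/K)*(\<Sum>t\<in>T. (1 + real (Nt t))) + real (card T) * E6 + Dint/(lo*\<epsilon>) + 2 + 1/F2"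
proof -
  have Tins: "T = insert b {a+1..<b}" unfolding T_def using b_bounds by auto
  have "(\<Sum>t\<in>{a+1..<b}. Dt t) \<le> (\<Sum>t\<in>{a+1..<b}. et t + integral {f' (real_of_int t)..f' (real_of_int t + 1)} Dfn / (lo*\<epsilon>))"
    by (rule sum_mono) (rule sup_disc_le_cell_integral, auto)
  also have "\<dots> = (\<Sum>t\<in>{a+1..<b}. et t) + (\<Sum>t\<in>{a+1..<b}. integral {f' (real_of_int t)..f' (real_of_int t + 1)} Dfn) / (lo*\<epsilon>)"
    by (simp add: sum.distrib sum_divide_distrib)
  also have "\<dots> \<le> (\<Sum>t\<in>{a+1..<b}. et t) + Dint / (lo*\<epsilon>)"
    using sum_cell_integrals_le lo_pos eps_pos by (simp add: divide_right_mono)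
  also have "(\<Sum>t\<in>{a+1..<b}. et t) \<le> (\<Sum>t\<in>T. et t)"
    by (rule sum_mono2) (use et_nonneg Tins in auto)
  also have "\<dots> = (2/K)*(\<Sum>t\<in>T. (1 + real (Nt t))) + real (card T) * E6"
    unfolding et_def by (simp only: sum.distrib sum_distrib_left[symmetric] sum_constant)
  finally have "(\<Sum>t\<in>{a+1..<b}. Dt t) \<le> (2/K)*(\<Sum>t\<in>T. (1 + real (Nt t))) + real (card T) * E6 + Dint / (lo*\<epsilon>)"
    by simp
  moreover have "(\<Sum>t\<in>T. Dt t) = Dt b + (\<Sum>t\<in>{a+1..<b}. Dt t)" unfolding Tins by simp
  moreover have "Dt b \<le> 2 + 1/F2" using Dt_le a_bounds b_bounds by simp
  ultimately show ?thesis by linarith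
qed

definition "Iv = I_avg f f' \<phi> A K"

lemma Iv_eq: "Iv = (1 / (f' (2*A) - f' A)) * Dint"
  unfolding Iv_def Dint_def Dfn_def by (rule I_avg_eq_integral_sup_disc)

lemma f'_dyadic_increment: "0 < f' (2*A) - f' A" "f' (2*A) - f' A \<le> hi*\<epsilon>*A"
proof -
  have "lo * \<epsilon> * (2*A - A) \<le> f' (2*A) - f' A \<and> f' (2*A) - f' A \<le> hi * \<epsilon> * (2*A - A)"
    using f'_increment_bounds[of A "2*A"] Apos by simp
  then show "0 < f' (2*A) - f' A" "f' (2*A) - f' A \<le> hi*\<epsilon>*A" using lo_pos eps_pos Apos
    by (smt (verit) mult_pos_pos)+
qed

lemma Iv_nonneg: "0 \<le> Iv" unfolding Iv_eq using f'_dyadic_increment Dint_nonneg by simp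

lemma Dint_bound: "Dint / (lo*\<epsilon>) \<le> (hi/lo) * A * Iv"
proof -
  have "Dint = (f' (2*A) - f' A) * Iv" unfolding Iv_eq using f'_dyadic_increment by simp
  also have "\<dots> \<le> (hi*\<epsilon>*A) * Iv" using f'_dyadic_increment Iv_nonneg by (intro mult_right_mono) auto
  finally have "Dint \<le> (hi*\<epsilon>*A) * Iv" .
  then have "Dint / (lo*\<epsilon>) \<le> (hi*\<epsilon>*A) * Iv / (lo*\<epsilon>)" using lo_pos eps_pos by (intro divide_right_mono) auto
  also have "\<dots> = (hi/lo) * A * Iv" using eps_pos lo_pos by (simp add: field_simps)
  finally show ?thesis .
qed

lemma scaled_error_le_step_errors:
  "real_of_int k * norm (S1 - S2) \<le> 2*(real_of_int k)^2 + 2*(real (card T) + real (\<Sum>t\<in>T. Nt t))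
     + K * (\<Sum>t\<in>T. Dt t) + real (card T) * (hi*X/F2 + hi*X/F2^2 + (hi*X+1)/F2)
     + (real (card T) * BV + 2*BV*(real_of_int k)^2 + 2*BV*real_of_int k)"
proof -
  have k0: "0 \<le> real_of_int k" using k_bounds by simp
  have dec: "of_int k * S1 - of_int k * S2 = (of_int k * S1 - (\<Sum>t\<in>T. P t)) + (\<Sum>t\<in>T. P t - Bt t)
        + (\<Sum>t\<in>T. Bt t - Mt t) + (\<Sum>t\<in>T. Mt t - W t) + ((\<Sum>t\<in>T. W t) - of_int k * S2)"
    by (simp add: sum_subtractf)
  have "real_of_int k * norm (S1 - S2) = norm (of_int k * S1 - of_int k * S2)"
    using k0 by (simp add: norm_mult right_diff_distrib[symmetric])
  also have "\<dots> \<le> norm (of_int k * S1 - (\<Sum>t\<in>T. P t)) + norm (\<Sum>t\<in>T. P t - Bt t)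
        + norm (\<Sum>t\<in>T. Bt t - Mt t) + norm (\<Sum>t\<in>T. Mt t - W t) + norm ((\<Sum>t\<in>T. W t) - of_int k * S2)"
    unfolding dec by (intro order_trans[OF norm_triangle_ineq] add_mono order_refl)
  also have "\<dots> \<le> 2*(real_of_int k)^2 + (\<Sum>t\<in>T. 2 * (1 + real (Nt t))) + (\<Sum>t\<in>T. K * Dt t)
        + (\<Sum>t\<in>T. hi*X/F2 + hi*X/F2^2 + (hi*X+1)/F2)
        + (real (card T) * BV + 2*BV*(real_of_int k)^2 + 2*BV*real_of_int k)"
  proof (intro add_mono)
    show "norm (of_int k * S1 - (\<Sum>t\<in>T. P t)) \<le> 2*(real_of_int k)^2" by (rule shift_average_error)
    show "norm (\<Sum>t\<in>T. P t - Bt t) \<le> (\<Sum>t\<in>T. 2 * (1 + real (Nt t)))"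
      by (rule order_trans[OF norm_sum sum_mono]) (rule block_vs_linearization)
    show "norm (\<Sum>t\<in>T. Bt t - Mt t) \<le> (\<Sum>t\<in>T. K * Dt t)"
      by (rule order_trans[OF norm_sum sum_mono]) (rule linearization_vs_sup_disc)
    show "norm (\<Sum>t\<in>T. Mt t - W t) \<le> (\<Sum>t\<in>T. hi*X/F2 + hi*X/F2^2 + (hi*X+1)/F2)"
      by (rule order_trans[OF norm_sum sum_mono]) (rule linearized_vs_inverse_weights)
    show "norm ((\<Sum>t\<in>T. W t) - of_int k * S2) \<le> real (card T) * BV + 2*BV*(real_of_int k)^2 + 2*BV*real_of_int k"
      by (rule inverse_weights_average_error)
  qed
  also have "(\<Sum>t\<in>T. 2 * (1 + real (Nt t))) = 2*(real (card T) + real (\<Sum>t\<in>T. Nt t))"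
    by (simp add: sum_distrib_left[symmetric] sum.distrib)
  also have "(\<Sum>t\<in>T. K * Dt t) = K * (\<Sum>t\<in>T. Dt t)" by (simp add: sum_distrib_left)
  also have "(\<Sum>t\<in>T. hi*X/F2 + hi*X/F2^2 + (hi*X+1)/F2) = real (card T) * (hi*X/F2 + hi*X/F2^2 + (hi*X+1)/F2)"
    by simp
  finally show ?thesis .
qed

lemma Q_le: "Q \<le> A * (QX * X)"
proof -
  have "real_of_int k * \<epsilon> \<le> K * \<epsilon>" using k_bounds eps_pos by (intro mult_right_mono) auto
  then have kX: "real_of_int k * \<epsilon> \<le> X" by (metis epsK_le_X mult.commute order_trans)
  have q1: "2*\<delta>*hi*A/lo = A * ((2*hi^2/lo) * X)"
    unfolding \<delta>_def using lo_pos by (simp add: field_simps power2_eq_square)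
  have q2: "real_of_int k*hi*\<epsilon>*A \<le> A * (hi * X)"
    using mult_left_mono[OF kX, of "A*hi"] Apos hi_ge1 by (simp add: algebra_simps)
  have q3: "(2*\<delta>+1)*2*\<delta>/(lo*\<epsilon>) \<le> A * (((2*hi+1)*2*hi/(lo*m0)) * X)"
  proof -
    have "(2*\<delta>+1)*2*\<delta>/(lo*\<epsilon>) = (2*\<delta>+1)*(2*hi*K^2)/lo"
      unfolding \<delta>_def X_def using eps_pos lo_pos by (simp add: field_simps)
    also have "\<dots> \<le> (2*hi+1)*(2*hi*(A*X/m0))/lo"
      using delta_le delta_nonneg hi_ge1 K_sq_le_AX_div_m0 lo_pos by (intro divide_right_mono mult_mono) auto
    also have "\<dots> = A * (((2*hi+1)*2*hi/(lo*m0)) * X)" using lo_pos m0_pos by (simp add: field_simps)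
    finally show ?thesis .
  qed
  have q4: "2*\<delta> + 1 \<le> A * (((2*hi+1)/m0) * X)"
  proof -
    have "(2*\<delta>+1)*1 \<le> (2*hi+1)*(A*X/m0)" using delta_le delta_nonneg hi_ge1 one_le_AX_div_m0 by (intro mult_mono) auto
    then show ?thesis using m0_pos by (simp add: field_simps)
  qed
  have "Q \<le> A * ((2*hi^2/lo) * X) + A * (hi * X) + A * (((2*hi+1)*2*hi/(lo*m0)) * X) + A * (((2*hi+1)/m0) * X)"
    unfolding Q_def using q1 q2 q3 q4 by linarith
  also have "\<dots> = A * (QX * X)" unfolding QX_def by (simp add: algebra_simps)
  finally show ?thesis .
qed

lemma E6_le: "E6 \<le> E4X * X + (1/F2)/K"
proof -
  have "2*hi*\<epsilon>/F2 + hi*\<epsilon>/F2^2 \<le> 2*hi*X/F2 + hi*X/F2^2"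
    using eps_le_X hi_ge1 F2_pos by (intro add_mono divide_right_mono mult_left_mono) auto
  then show ?thesis unfolding E6_def E4X_def by (simp add: field_simps)
qed

lemma E4X_nonneg: "0 \<le> E4X" unfolding E4X_def using hi_ge1 F2_pos by simp

lemma scale_bounds:
  defines "Z \<equiv> A * real_of_int k"
  shows "real_of_int k \<le> Z * (X/m0)" "(real_of_int k)^2 \<le> Z * (X/m0)" "K \<le> Z * (X/m0)"
    and "real (card T) \<le> Z * (4/K)" "K * real (card T) \<le> 4 * Z" "real (card T) \<le> 2 * Z"
proof -
  have k: "1 \<le> real_of_int k" "real_of_int k \<le> K" "K \<le> 2 * real_of_int k" using k_bounds by auto
  show "real_of_int k \<le> Z * (X/m0)"
    using mult_left_mono[OF one_le_AX_div_m0, of "real_of_int k"] k unfolding Z_def by (simp add: field_simps)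
  show "(real_of_int k)^2 \<le> Z * (X/m0)"
    using mult_left_mono[OF order_trans[OF k(2) K_le_AX_div_m0], of "real_of_int k"] k
    unfolding Z_def by (simp add: field_simps power2_eq_square)
  show "K \<le> Z * (X/m0)"
    using mult_left_mono[OF k(1), of "A*X/m0"] K_le_AX_div_m0 one_le_AX_div_m0 unfolding Z_def by (simp add: field_simps)
  have "K * real (card T) \<le> (2 * real_of_int k) * (2*A)" using k card_T by (intro mult_mono) auto
  then show KT: "K * real (card T) \<le> 4 * Z" unfolding Z_def by (simp add: mult.commute)
  then show "real (card T) \<le> Z * (4/K)" using K_pos by (simp add: field_simps)
  show "real (card T) \<le> 2 * Z" using card_T k Apos unfolding Z_def by (smt (verit) mult_le_cancel_left1)
qed

lemma scaled_error_le:
  "real_of_int k * norm (S1 - S2) \<le> 2*(real_of_int k)^2 + 4*(real (card T) + real (\<Sum>t\<in>T. Nt t))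
     + K * real (card T) * E6 + K * ((hi/lo) * A * Iv) + K * (2 + 1/F2) + real (card T) * (E4X * X + 1/F2)
     + real (card T) * BV + 2*BV*(real_of_int k)^2 + 2*BV*real_of_int k"
proof -
  have "(\<Sum>t\<in>T. (1 + real (Nt t))) = real (card T) + real (\<Sum>t\<in>T. Nt t)" by (simp add: sum.distrib)
  then have "K * (\<Sum>t\<in>T. Dt t) \<le> K * ((2/K)*(real (card T) + real (\<Sum>t\<in>T. Nt t)) + real (card T) * E6
      + (hi/lo) * A * Iv + 2 + 1/F2)"
    using sum_sup_disc_le Dint_bound K_pos by (intro mult_left_mono) auto
  also have "\<dots> = 2*(real (card T) + real (\<Sum>t\<in>T. Nt t)) + K * real (card T) * E6 + K * ((hi/lo) * A * Iv)
      + K * (2 + 1/F2)"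
    using K_pos by (simp add: field_simps)
  finally have "K * (\<Sum>t\<in>T. Dt t) \<le> \<dots>" .
  moreover have "hi*X/F2 + hi*X/F2^2 + (hi*X+1)/F2 = E4X*X + 1/F2"
    unfolding E4X_def using F2_pos by (simp add: field_simps)
  ultimately show ?thesis using scaled_error_le_step_errors by simp
qed

lemma avg_error_eq: "avg_error \<phi> A = (1/A) * norm (S1 - S2)"
  unfolding avg_error_def S1_def T_eq Fn_def S2_def G_def ..

lemma avg_error_le_main: "avg_error \<phi> A \<le> Cx*X + Ck/K + CI*Iv"
proof -
  define kr where "kr = real_of_int k"
  define cT where "cT = real (card T)"
  define Z where "Z = A * kr"
  note sc = scale_bounds[folded kr_def cT_def, folded Z_def]
  have kr: "1 \<le> kr" "K \<le> 2*kr" using k_bounds unfolding kr_def by auto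
  have cT0: "0 \<le> cT" unfolding cT_def by simp
  have "kr * Q \<le> kr * (A * (QX*X))" using Q_le kr by (intro mult_left_mono) auto
  then have N: "real (\<Sum>t\<in>T. Nt t) \<le> Z * (QX*X)"
    using sum_near_count_le unfolding Z_def kr_def by (simp add: algebra_simps)
  have E6: "K*cT*E6 \<le> Z * (4*E4X*X) + Z * ((4/F2)/K)"
  proof -
    have "K*cT*E6 \<le> K*cT*(E4X*X + (1/F2)/K)" using E6_le K_pos cT0 by (intro mult_left_mono) auto
    also have "\<dots> = (K*cT)*(E4X*X) + cT*(1/F2)" using K_pos by (simp add: field_simps)
    also have "\<dots> \<le> (4*Z)*(E4X*X) + (Z*(4/K))*(1/F2)"
      using sc(4,5) E4X_nonneg X_nonneg F2_pos by (intro add_mono mult_right_mono) auto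
    finally show ?thesis by (simp add: algebra_simps)
  qed
  have Iv: "K * ((hi/lo) * A * Iv) \<le> Z * (CI * Iv)"
    using mult_right_mono[OF kr(2), of "(hi/lo) * A * Iv"] hi_ge1 lo_pos Apos Iv_nonneg
    unfolding Z_def CI_def by (simp add: algebra_simps)
  have lin: "cT * (E4X*X + 1/F2) \<le> Z * (2*E4X*X) + Z * ((4/F2)/K)"
    using mult_right_mono[OF sc(6), of "E4X*X"] mult_right_mono[OF sc(4), of "1/F2"] E4X_nonneg X_nonneg F2_pos
    by (simp add: algebra_simps)
  have "kr * norm (S1 - S2) \<le> Z * ((2/m0)*X) + (Z * (16/K) + Z * ((4*QX)*X)) + (Z * (4*E4X*X) + Z * ((4/F2)/K))
       + Z * (CI * Iv) + Z * (((2+1/F2)/m0)*X) + (Z * (2*E4X*X) + Z * ((4/F2)/K)) + Z * ((4*BV)/K)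
       + Z * ((2*BV/m0)*X) + Z * ((2*BV/m0)*X)"
  proof -
    have BVZ: "2*BV * (Z*(X/m0)) = Z * ((2*BV/m0)*X)" by (simp add: field_simps)
    have "2*BV*kr^2 \<le> 2*BV * (Z*(X/m0))" "2*BV*kr \<le> 2*BV * (Z*(X/m0))"
      using sc(1,2) BV_nonneg by (intro mult_left_mono; simp)+
    then have kr2: "2*BV*kr^2 \<le> Z * ((2*BV/m0)*X)" "2*BV*kr \<le> Z * ((2*BV/m0)*X)"
      unfolding BVZ .
    have "2*kr^2 \<le> 2 * (Z*(X/m0))" using sc(2) by simp
    also have "\<dots> = Z * ((2/m0)*X)" by (simp add: field_simps)
    finally have kr2': "2*kr^2 \<le> Z * ((2/m0)*X)" .
    have K2: "K*(2 + 1/F2) \<le> Z * (((2+1/F2)/m0)*X)"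
      using mult_right_mono[OF sc(3), of "2 + 1/F2"] F2_pos by (simp add: algebra_simps)
    have cT: "4*(cT + real (\<Sum>t\<in>T. Nt t)) \<le> Z * (16/K) + Z * ((4*QX)*X)"
      using sc(4) N by argo
    have cT_BV: "cT * BV \<le> Z * ((4*BV)/K)"
      using mult_right_mono[OF sc(4) BV_nonneg] by simp
    show ?thesis using scaled_error_le[folded kr_def cT_def] kr2 kr2' K2 cT cT_BV E6 Iv lin by argo
  qed
  also have "\<dots> = kr * (A * (Cx*X + Ck/K + CI*Iv))"
    unfolding Cx_def Ck_def Z_def by (simp add: algebra_simps add_divide_distrib)
  finally have "norm (S1 - S2) \<le> A * (Cx*X + Ck/K + CI*Iv)" using kr by simp
  then show ?thesis unfolding avg_error_eq using Apos by (simp add: field_simps)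
qed
end

context convex_doubling
begin

definition "C_total = max (max Cx (Ck / (ln 2)^2)) (max CI (max (B0/\<theta>) (B0 / (ln 2)^2)))"

lemma avg_error_le_small_K:
  assumes "A \<ge> 2" "0 < K" "K < 1" and phi: "\<forall>m. norm (\<phi> m) \<le> 1"
  shows "avg_error \<phi> A \<le> (B0 / (ln 2)^2) * ((ln A)^2 / K)"
proof -
  have "(ln 2)^2 \<le> (ln A)^2 / K"
    using assms(1-3) power_mono[of "ln 2" "ln A" 2] order_trans[of _ "(ln A)^2" "(ln A)^2 / K"]
    by (simp add: le_divide_eq)
  then have "B0 \<le> (B0 / (ln 2)^2) * ((ln A)^2 / K)"
    using B0_nonneg mult_left_mono[of "(ln 2)^2" "(ln A)^2 / K" "B0 / (ln 2)^2"] by simp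
  then show ?thesis using avg_error_le_B0[OF assms(1) phi] by linarith
qed

lemma avg_error_le_large_X:
  assumes "A \<ge> 2" "\<theta> < f'' A * K^2" and phi: "\<forall>m. norm (\<phi> m) \<le> 1"
  shows "avg_error \<phi> A \<le> (B0 / \<theta>) * (f'' A * K^2)"
proof -
  have "B0 * 1 \<le> B0 * (f'' A * K^2 / \<theta>)" using assms(2) theta_pos B0_nonneg by (intro mult_left_mono) auto
  then show ?thesis using avg_error_le_B0[OF assms(1) phi] by simp
qed

lemma avg_error_le_regime:
  assumes "A \<ge> 2" "K \<ge> 1" "f'' A * K^2 \<le> \<theta>" and phi: "\<forall>m. norm (\<phi> m) \<le> 1"
  shows "avg_error \<phi> A \<le> Cx * (f'' A * K^2) + (Ck / (ln 2)^2) * ((ln A)^2 / K) + CI * I_avg f f' \<phi> A K"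
proof -
  interpret main_regime f f' f'' c1 c2 A K \<phi> using assms by unfold_locales
  have "0 \<le> Ck" unfolding Ck_def using BV_nonneg F2_pos by simp
  moreover have "(ln 2)^2 \<le> (ln A)^2" using assms(1) by (intro power_mono) auto
  ultimately have "Ck / K \<le> (Ck / (ln 2)^2) * ((ln A)^2 / K)"
    using K_pos by (simp add: field_simps mult_left_mono)
  then show ?thesis using avg_error_le_main unfolding X_def \<epsilon>_def Iv_def by linarith
qed

lemma avg_error_le:
  assumes "A \<ge> 2" "K > 0" and phi: "\<forall>m. norm (\<phi> m) \<le> 1"
  shows "avg_error \<phi> A \<le> C_total * (f'' A * K^2 + (ln A)^2 / K + I_avg f f' \<phi> A K)"
proof -
  have terms: "0 \<le> f'' A * K^2" "0 \<le> (ln A)^2 / K" "0 \<le> I_avg f f' \<phi> A K"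
    using f''pos[of A] I_avg_nonneg[OF assms] assms by auto
  have C: "Cx \<le> C_total" "Ck / (ln 2)^2 \<le> C_total" "CI \<le> C_total" "B0/\<theta> \<le> C_total" "B0 / (ln 2)^2 \<le> C_total"
    unfolding C_total_def by auto
  then have "0 \<le> C_total" using B0_nonneg by (smt (verit) divide_nonneg_nonneg zero_le_power2)
  then have parts: "C_total * t \<le> C_total * (f'' A * K^2 + (ln A)^2 / K + I_avg f f' \<phi> A K)"
    if "t \<in> {f'' A * K^2, (ln A)^2 / K}" for t
    using that terms by (intro mult_left_mono) auto
  consider "K < 1" | "K \<ge> 1" "\<theta> < f'' A * K^2" | "K \<ge> 1" "f'' A * K^2 \<le> \<theta>" by linarith
  then show ?thesis
  proof cases
    case 1
    then show ?thesis using avg_error_le_small_K[OF assms(1,2) 1 phi] mult_right_mono[OF C(5) terms(2)] parts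
      by fastforce
  next
    case 2
    then show ?thesis using avg_error_le_large_X[OF assms(1) 2(2) phi] mult_right_mono[OF C(4) terms(1)] parts
      by fastforce
  next
    case 3
    have "Cx * (f'' A * K^2) + (Ck / (ln 2)^2) * ((ln A)^2 / K) + CI * I_avg f f' \<phi> A K
        \<le> C_total * (f'' A * K^2) + C_total * ((ln A)^2 / K) + C_total * I_avg f f' \<phi> A K"
      using C terms by (intro add_mono mult_right_mono) auto
    then show ?thesis using avg_error_le_regime[OF assms(1) 3 phi] by (simp add: distrib_left)
  qed
qed

end

theorem proposition1:
  fixes f f' f'' :: "real \<Rightarrow> real" and c1 c2 :: real
  assumes df: "\<And>x. x > 0 \<Longrightarrow> (f has_real_derivative f' x) (at x)"
    and df': "\<And>x. x > 0 \<Longrightarrow> (f' has_real_derivative f'' x) (at x)"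
    and cont: "continuous_on {0<..} f''"
    and fpos: "\<And>x. x > 0 \<Longrightarrow> f x > 0"
    and f'pos: "\<And>x. x > 0 \<Longrightarrow> f' x > 0"
    and f''pos: "\<And>x. x > 0 \<Longrightarrow> f'' x > 0"
    and c1: "c1 \<ge> 1/2" and c2: "c2 > 0"
    and doubling: "\<And>x y. 0 < x \<Longrightarrow> x \<le> y \<Longrightarrow> y \<le> 2*x \<Longrightarrow>
                     c1 * f'' x \<le> f'' y \<and> f'' y \<le> c2 * f'' x"
  shows "\<exists>C. \<forall>\<phi> :: int \<Rightarrow> complex. \<forall>A K :: real.
           (\<forall>m. norm (\<phi> m) \<le> 1) \<longrightarrow> A \<ge> 2 \<longrightarrow> K > 0 \<longrightarrow>
           (1 / A) * norm ((\<Sum>n\<in>{n::int. A < real_of_int n \<and> real_of_int n \<le> 2*A}. \<phi> \<lfloor>f (real_of_int n)\<rfloor>)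
              - (\<Sum>m\<in>{m::int. f A < real_of_int m \<and> real_of_int m \<le> f (2*A)}.
                   \<phi> m * complex_of_real (deriv (inv_into {0<..} f) (real_of_int m))))
           \<le> C * (f'' A * K^2 + (ln A)^2 / K + I_avg f f' \<phi> A K)"
proof -
  interpret convex_doubling f f' f'' c1 c2
    using df df' f'pos f''pos c1 c2 doubling by unfold_locales auto
  show ?thesis
    using avg_error_le unfolding avg_error_def by (intro exI[of _ C_total] allI impI) simp
qed

end
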